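(* Let $\rho,\sigma$ be full-rank density operators on a finite-dimensional Hilbert space. For any $x\le\lambda_{\min}(\rho)$, $$\beta_{1-x}(\rho\|\sigma)=x\exp\bigl(-\widetilde D_{+\infty}(\rho\|\sigma)\bigr),\qquad 1-\beta_x(\rho\|\sigma)=x\exp\bigl(-\widetilde D_{-\infty}(\rho\|\sigma)\bigr),$$ $$\widehat\beta^{\mathrm R}_{1-x}(\rho\|\sigma)=x\exp\bigl(-D_{+\infty}(\rho\|\mathcal P_\rho(\sigma))\bigr),\qquad 1-\widehat\beta^{\mathrm R}_x(\rho\|\sigma)=x\exp\bigl(-D_{-\infty}(\rho\|\mathcal P_\rho(\sigma))\bigr).$$ Also, for any $x\le\lambda_{\min}(\mathcal P_\sigma(\rho))$, $$\widehat\beta^{\mathrm L}_{1-x}(\rho\|\sigma)=x\exp\bigl(-D_{+\infty}(\mathcal P_\sigma(\rho)\|\sigma)\bigr),\qquad 1-\widehat\beta^{\mathrm L}_x(\rho\|\sigma)=x\exp\bigl(-D_{-\infty}(\mathcal P_\sigma(\rho)\|\sigma)\bigr).$$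
   Context: $\beta_x(\rho\|\sigma)=\min\{\mathrm{Tr}(\sigma Q):0\le Q\le\mathbb1,\ \mathrm{Tr}(\rho Q)\ge1-x\}$. For $\tau=\sum_\lambda\lambda\Pi_\lambda$, $\mathcal P_\tau(X)=\sum_\lambda\Pi_\lambda X\Pi_\lambda$; $\widehat\beta^{\mathrm L}_x(\rho\|\sigma)=\beta_x(\mathcal P_\sigma(\rho)\|\sigma)$, $\widehat\beta^{\mathrm R}_x(\rho\|\sigma)=\beta_x(\rho\|\mathcal P_\rho(\sigma))$. $\widetilde D_{+\infty}(\rho\|\sigma)=\log\lambda_{\max}(\sigma^{-1/2}\rho\sigma^{-1/2})$ and $\widetilde D_{-\infty}(\rho\|\sigma)=-\log\lambda_{\max}(\rho^{-1/2}\sigma\rho^{-1/2})$ (the $\alpha\to\pm\infty$ limits of the minimal Rényi divergence); for commuting arguments these are written $D_{\pm\infty}$. $\exp$ and $\log$ share a base; $\lambda_{\min}$ is the smallest eigenvalue. *)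

theory Defs
  imports Complex_Main "Jordan_Normal_Form.Jordan_Normal_Form"
begin

definition ctrace :: "complex mat \<Rightarrow> complex" where
  "ctrace A = (\<Sum>i<dim_row A. A $$ (i, i))"

definition adj :: "complex mat \<Rightarrow> complex mat" where
  "adj A = mat (dim_col A) (dim_row A) (\<lambda>(i, j). cnj (A $$ (j, i)))"

definition hermitian :: "complex mat \<Rightarrow> bool" where
  "hermitian A \<longleftrightarrow> A \<in> carrier_mat (dim_row A) (dim_row A) \<and> adj A = A"

definition psd :: "complex mat \<Rightarrow> bool" where
  "psd A \<longleftrightarrow> hermitian A \<and>
     (\<forall>v \<in> carrier_vec (dim_row A). 0 \<le> Re (conjugate v \<bullet> (A *\<^sub>v v)))"

definition pd :: "complex mat \<Rightarrow> bool" where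
  "pd A \<longleftrightarrow> psd A \<and> det A \<noteq> 0"

definition density_op :: "nat \<Rightarrow> complex mat \<Rightarrow> bool" where
  "density_op n \<rho> \<longleftrightarrow> \<rho> \<in> carrier_mat n n \<and> psd \<rho> \<and> ctrace \<rho> = 1"

definition full_rank :: "complex mat \<Rightarrow> bool" where
  "full_rank A \<longleftrightarrow> det A \<noteq> 0"

definition rspec :: "complex mat \<Rightarrow> real set" where
  "rspec A = {r. eigenvalue A (complex_of_real r)}"

definition lambda_min :: "complex mat \<Rightarrow> real" where
  "lambda_min A = Min (rspec A)"

definition lambda_max :: "complex mat \<Rightarrow> real" where
  "lambda_max A = Max (rspec A)"

definition inv_sqrt :: "complex mat \<Rightarrow> complex mat" where
  "inv_sqrt A = (THE B. B \<in> carrier_mat (dim_row A) (dim_row A) \<and> pd B \<and>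
                        B * B * A = 1\<^sub>m (dim_row A))"

definition eig_proj :: "complex mat \<Rightarrow> real \<Rightarrow> complex mat" where
  "eig_proj \<tau> l = (THE P. P \<in> carrier_mat (dim_row \<tau>) (dim_row \<tau>) \<and> hermitian P \<and> P * P = P \<and>
      (\<forall>v \<in> carrier_vec (dim_row \<tau>). P *\<^sub>v v = v \<longleftrightarrow> \<tau> *\<^sub>v v = complex_of_real l \<cdot>\<^sub>v v))"

definition pinch :: "complex mat \<Rightarrow> complex mat \<Rightarrow> complex mat" where
  "pinch \<tau> X = mat (dim_row \<tau>) (dim_row \<tau>)
     (\<lambda>(i, j). \<Sum>l\<in>rspec \<tau>. (eig_proj \<tau> l * X * eig_proj \<tau> l) $$ (i, j))"

definition beta :: "real \<Rightarrow> complex mat \<Rightarrow> complex mat \<Rightarrow> real" where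
  "beta x \<rho> \<sigma> = Inf {Re (ctrace (\<sigma> * Q)) | Q.
      Q \<in> carrier_mat (dim_row \<rho>) (dim_row \<rho>) \<and> psd Q \<and> psd (1\<^sub>m (dim_row \<rho>) - Q) \<and>
      Re (ctrace (\<rho> * Q)) \<ge> 1 - x}"

definition beta_L :: "real \<Rightarrow> complex mat \<Rightarrow> complex mat \<Rightarrow> real" where
  "beta_L x \<rho> \<sigma> = beta x (pinch \<sigma> \<rho>) \<sigma>"

definition beta_R :: "real \<Rightarrow> complex mat \<Rightarrow> complex mat \<Rightarrow> real" where
  "beta_R x \<rho> \<sigma> = beta x \<rho> (pinch \<rho> \<sigma>)"

text \<open>Minimal Renyi divergences of order +infinity and -infinity (natural log).\<close>
definition D_pinf :: "complex mat \<Rightarrow> complex mat \<Rightarrow> real" where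
  "D_pinf \<rho> \<sigma> = ln (lambda_max (inv_sqrt \<sigma> * \<rho> * inv_sqrt \<sigma>))"

definition D_minf :: "complex mat \<Rightarrow> complex mat \<Rightarrow> real" where
  "D_minf \<rho> \<sigma> = - ln (lambda_max (inv_sqrt \<rho> * \<sigma> * inv_sqrt \<rho>))"

end

theory Submission
  imports Defs "Jordan_Normal_Form.Spectral_Radius"
begin

text \<open>For positive definite \<rho> and \<sigma> let \<lambda> be the largest eigenvalue of
  \<sigma>^(-1/2) \<rho> \<sigma>^(-1/2), so that D_pinf \<rho> \<sigma> = ln \<lambda>. Every test Q \<ge> 0 satisfies
  Tr(\<rho> Q) \<le> \<lambda> Tr(\<sigma> Q), with equality for the projection onto \<sigma>^(-1/2) u, u a top
  eigenvector. Rescaling this projection so that Tr(\<rho> Q) = x keeps it below the identity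
  because x \<le> lambda_min \<rho>, hence beta (1 - x) \<rho> \<sigma> = x / \<lambda>. Exchanging the roles of
  \<rho> and \<sigma> and passing to complementary tests 1 - Q gives 1 - beta x \<rho> \<sigma> = x exp (- D_minf \<rho> \<sigma>).
  The pinched identities are these two for the pairs (\<rho>, pinch \<rho> \<sigma>) and (pinch \<sigma> \<rho>, \<sigma>),
  since pinching by a Hermitian matrix preserves positive definiteness and the trace.\<close>

lemma adj_carrier[simp]: "adj A \<in> carrier_mat (dim_col A) (dim_row A)"
  "dim_row (adj A) = dim_col A" "dim_col (adj A) = dim_row A"
  by (auto simp: adj_def)

lemma adj_carrier_mat[simp]: "A \<in> carrier_mat n m \<Longrightarrow> adj A \<in> carrier_mat m n"
  by (auto simp: adj_def)

lemma adj_mult_vec_carrier[simp]: "A \<in> carrier_mat n m \<Longrightarrow> v \<in> carrier_vec n \<Longrightarrow> adj A *\<^sub>v v \<in> carrier_vec m"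
  by (metis adj_carrier_mat mult_mat_vec_carrier)

lemma adj_index[simp]: "i < dim_col A \<Longrightarrow> j < dim_row A \<Longrightarrow> adj A $$ (i,j) = cnj (A $$ (j,i))"
  by (simp add: adj_def)

lemma adj_adj[simp]: "adj (adj A) = A"
  by (rule eq_matI) (auto simp: adj_def)

lemma adj_one[simp]: "adj (1\<^sub>m n) = 1\<^sub>m n"
  by (rule eq_matI) (auto simp: adj_def)

lemma adj_mult: "A \<in> carrier_mat n m \<Longrightarrow> B \<in> carrier_mat m k \<Longrightarrow> adj (A * B) = adj B * adj A"
  by (rule eq_matI) (auto simp: adj_def scalar_prod_def cnj_sum mult.commute intro!: sum.cong)

lemma adj_minus: "A \<in> carrier_mat n m \<Longrightarrow> B \<in> carrier_mat n m \<Longrightarrow> adj (A - B) = adj A - adj B"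
  by (rule eq_matI) (auto simp: adj_def)

lemma adj_smult: "adj (c \<cdot>\<^sub>m A) = cnj c \<cdot>\<^sub>m adj A"
  by (rule eq_matI) (auto simp: adj_def)

lemma hermitian_congruence:
  assumes A: "A \<in> carrier_mat n n" and hA: "adj A = A" and V: "V \<in> carrier_mat n m"
  shows "adj (adj V * A * V) = adj V * A * V"
proof -
  have "adj (adj V * A * V) = adj V * adj (adj V * A)"
    by (rule adj_mult[of _ m n _ m]) (use V A in auto)
  also have "adj (adj V * A) = A * V"
    using adj_mult[of "adj V" m n A n] V A hA by simp
  finally show ?thesis using V A by (simp add: assoc_mult_mat[of _ m n _ n _ m])
qed

lemma mult_mat_vec_zero[simp]: "A \<in> carrier_mat m n \<Longrightarrow> A *\<^sub>v 0\<^sub>v n = 0\<^sub>v m"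
  by (rule eq_vecI) auto

definition cinner :: "complex vec \<Rightarrow> complex vec \<Rightarrow> complex" where
  "cinner v w = (\<Sum>i<dim_vec w. cnj (v $ i) * w $ i)"

lemma cinner_adj: assumes "A \<in> carrier_mat n m" "v \<in> carrier_vec n" "w \<in> carrier_vec m"
  shows "cinner v (A *\<^sub>v w) = cinner (adj A *\<^sub>v v) w"
proof -
  have "cinner v (A *\<^sub>v w) = (\<Sum>i<n. \<Sum>k<m. cnj (v $ i) * (A $$ (i,k) * w $ k))"
    using assms by (auto simp: cinner_def scalar_prod_def sum_distrib_left lessThan_atLeast0 intro!: sum.cong)
  also have "\<dots> = (\<Sum>k<m. \<Sum>i<n. cnj (v $ i) * (A $$ (i,k) * w $ k))"
    by (rule sum.swap)
  also have "\<dots> = cinner (adj A *\<^sub>v v) w"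
    using assms by (auto simp: cinner_def scalar_prod_def sum_distrib_right cnj_sum lessThan_atLeast0 intro!: sum.cong)
  finally show ?thesis .
qed

lemma hermitian_cinner: "A \<in> carrier_mat n n \<Longrightarrow> adj A = A \<Longrightarrow> v \<in> carrier_vec n \<Longrightarrow> w \<in> carrier_vec n
  \<Longrightarrow> cinner v (A *\<^sub>v w) = cinner (A *\<^sub>v v) w"
  using cinner_adj[of A n n v w] by simp

lemma cinner_commute: "dim_vec v = dim_vec w \<Longrightarrow> cinner w v = cnj (cinner v w)"
  by (auto simp: cinner_def cnj_sum mult.commute)

lemma cinner_diff_right: "dim_vec w1 = dim_vec w2 \<Longrightarrow> cinner v (w1 - w2) = cinner v w1 - cinner v w2"
  by (auto simp: cinner_def right_diff_distrib sum_subtractf)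

lemma cinner_smult_right[simp]: "cinner v (c \<cdot>\<^sub>v w) = c * cinner v w"
  by (auto simp: cinner_def sum_distrib_left ac_simps)

lemma cinner_smult_left[simp]: "dim_vec v = dim_vec w \<Longrightarrow> cinner (c \<cdot>\<^sub>v v) w = cnj c * cinner v w"
  by (auto simp: cinner_def sum_distrib_left ac_simps)

lemma cinner_zero_right[simp]: "cinner w (0\<^sub>v n) = 0"
  by (auto simp: cinner_def)

lemma cinner_self: "cinner v v = complex_of_real (\<Sum>i<dim_vec v. (cmod (v $ i))\<^sup>2)"
  unfolding cinner_def of_real_sum by (intro sum.cong refl) (metis complex_norm_square mult.commute)

lemma cinner_self_Re: "Re (cinner v v) = (\<Sum>i<dim_vec v. (cmod (v $ i))\<^sup>2)"
  by (simp add: cinner_self)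

lemma cinner_self_real: "cinner v v = complex_of_real (Re (cinner v v))"
  by (simp add: cinner_self)

lemma cinner_self_eq_0: "v \<in> carrier_vec n \<Longrightarrow> cinner v v = 0 \<longleftrightarrow> v = 0\<^sub>v n"
proof
  assume v: "v \<in> carrier_vec n" and "cinner v v = 0"
  then have "(\<Sum>i<n. (cmod (v $ i))\<^sup>2) = 0" using cinner_self_Re[of v] by simp
  then have "\<forall>i\<in>{..<n}. (cmod (v $ i))\<^sup>2 = 0"
    by (subst sum_nonneg_eq_0_iff[symmetric]) auto
  then show "v = 0\<^sub>v n" using v by (auto intro!: eq_vecI)
qed (auto simp: cinner_def)

lemma cinner_self_pos: "v \<in> carrier_vec n \<Longrightarrow> v \<noteq> 0\<^sub>v n \<Longrightarrow> 0 < Re (cinner v v)"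
  using cinner_self_eq_0[of v n] cinner_self_real[of v] cinner_self_Re[of v]
  by (metis less_eq_real_def of_real_0 sum_nonneg zero_le_power2)

lemma conjugate_scalar_prod_cinner: "dim_vec v = dim_vec w \<Longrightarrow> conjugate v \<bullet> w = cinner v w"
  by (auto simp: cinner_def scalar_prod_def lessThan_atLeast0 intro!: sum.cong)

lemma cinner_cscalar_prod: "dim_vec a = dim_vec b \<Longrightarrow> cinner a b = b \<bullet>c a"
  by (auto simp: cinner_def scalar_prod_def lessThan_atLeast0 mult.commute intro!: sum.cong)

lemma adj_mult_index: assumes "A \<in> carrier_mat n k" "B \<in> carrier_mat n k'" "i < k" "j < k'"
  shows "(adj A * B) $$ (i,j) = cinner (col A i) (col B j)"
  using assms by (auto simp: cinner_def scalar_prod_def lessThan_atLeast0 intro!: sum.cong)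

lemma adj_mult_vec_index: assumes "A \<in> carrier_mat n k" "x \<in> carrier_vec n" "j < k"
  shows "(adj A *\<^sub>v x) $ j = cinner (col A j) x"
  using assms by (auto simp: cinner_def scalar_prod_def lessThan_atLeast0 intro!: sum.cong)

lemma isometry_cinner:
  assumes V: "V \<in> carrier_mat n m" and VV: "adj V * V = 1\<^sub>m m"
    and y: "y \<in> carrier_vec m" and y': "y' \<in> carrier_vec m"
  shows "cinner (V *\<^sub>v y) (V *\<^sub>v y') = cinner y y'"
proof -
  have "cinner (V *\<^sub>v y) (V *\<^sub>v y') = cinner ((adj V * V) *\<^sub>v y) y'"
    using cinner_adj[OF V, of "V *\<^sub>v y" y'] V y y' by (simp add: assoc_mult_mat_vec[of _ m n _ m])
  then show ?thesis using VV y by simp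
qed

definition normalized :: "complex vec \<Rightarrow> complex vec" where
  "normalized v = complex_of_real (1 / sqrt (Re (cinner v v))) \<cdot>\<^sub>v v"

lemma cinner_normalized:
  assumes v: "v \<in> carrier_vec n" "v \<noteq> 0\<^sub>v n"
  shows "cinner (normalized v) (normalized v) = 1"
proof -
  define r where "r = Re (cinner v v)"
  define s where "s = 1 / sqrt r"
  have r: "0 < r" unfolding r_def by (rule cinner_self_pos[OF v])
  have "cinner (normalized v) (normalized v) = cnj (complex_of_real s) * (complex_of_real s * cinner v v)"
    by (simp add: normalized_def r_def s_def)
  also have "\<dots> = complex_of_real (s * s * r)"
    by (subst cinner_self_real) (simp add: r_def)
  also have "s * s * r = 1" using r by (simp add: s_def field_simps)
  finally show ?thesis by simp
qed

definition orthonormal :: "nat \<Rightarrow> complex vec list \<Rightarrow> bool" where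
  "orthonormal n ws \<longleftrightarrow> set ws \<subseteq> carrier_vec n \<and>
     (\<forall>i<length ws. \<forall>j<length ws. cinner (ws!i) (ws!j) = (if i = j then 1 else 0))"

lemma orthonormal_col[simp]: "orthonormal n ws \<Longrightarrow> i < length ws \<Longrightarrow> col (mat_of_cols n ws) i = ws!i"
  unfolding orthonormal_def by (intro col_mat_of_cols) auto

lemma orthonormal_tl: assumes "orthonormal n ws" shows "orthonormal n (tl ws)"
  unfolding orthonormal_def
proof (intro conjI allI impI)
  show "set (tl ws) \<subseteq> carrier_vec n" using assms unfolding orthonormal_def by (cases ws) auto
  fix i j assume "i < length (tl ws)" "j < length (tl ws)"
  then show "cinner (tl ws ! i) (tl ws ! j) = (if i = j then 1 else 0)"
    using assms unfolding orthonormal_def by (simp add: nth_tl)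
qed

lemma orthonormal_adj_mult: assumes "orthonormal n ws"
  shows "adj (mat_of_cols n ws) * mat_of_cols n ws = 1\<^sub>m (length ws)"
proof (rule eq_matI)
  fix i j assume ij: "i < dim_row (1\<^sub>m (length ws))" "j < dim_col (1\<^sub>m (length ws))"
  then have "(adj (mat_of_cols n ws) * mat_of_cols n ws) $$ (i, j) = cinner (ws!i) (ws!j)"
    using adj_mult_index[of "mat_of_cols n ws" n "length ws" "mat_of_cols n ws" "length ws" i j]
      orthonormal_col[OF assms] by simp
  then show "(adj (mat_of_cols n ws) * mat_of_cols n ws) $$ (i, j) = 1\<^sub>m (length ws) $$ (i, j)"
    using assms ij unfolding orthonormal_def by simp
qed auto

lemma orthonormal_unitary: assumes "orthonormal n ws" "length ws = n"
  shows "adj (mat_of_cols n ws) * mat_of_cols n ws = 1\<^sub>m n"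
    "mat_of_cols n ws * adj (mat_of_cols n ws) = 1\<^sub>m n"
proof -
  show 1: "adj (mat_of_cols n ws) * mat_of_cols n ws = 1\<^sub>m n"
    using orthonormal_adj_mult[OF assms(1)] assms(2) by simp
  show "mat_of_cols n ws * adj (mat_of_cols n ws) = 1\<^sub>m n"
    by (rule mat_mult_left_right_inverse[OF _ _ 1]) (use assms(2) in auto)
qed

lemma orthonormal_basis_eq:
  assumes ws: "orthonormal n ws" "length ws = n" and x: "x \<in> carrier_vec n" "x' \<in> carrier_vec n"
    and coords: "\<And>l. l < n \<Longrightarrow> cinner (ws!l) x = cinner (ws!l) x'"
  shows "x = x'"
proof -
  let ?W = "mat_of_cols n ws"
  have W: "?W \<in> carrier_mat n n" using ws(2) by auto
  have "adj ?W *\<^sub>v x = adj ?W *\<^sub>v x'"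
  proof (rule eq_vecI)
    fix l assume "l < dim_vec (adj ?W *\<^sub>v x')"
    then have l: "l < n" using ws(2) by simp
    then have "col ?W l = ws!l" using orthonormal_col[OF ws(1)] ws(2) by simp
    then show "(adj ?W *\<^sub>v x) $ l = (adj ?W *\<^sub>v x') $ l"
      using adj_mult_vec_index[OF W x(1) l] adj_mult_vec_index[OF W x(2) l] coords[OF l] by simp
  qed (use W in simp)
  then have "(?W * adj ?W) *\<^sub>v x = (?W * adj ?W) *\<^sub>v x'"
    using W x by (simp add: assoc_mult_mat_vec[of _ n n _ n])
  then show ?thesis using orthonormal_unitary[OF ws] x by simp
qed

lemma orthonormal_completion:
  assumes v: "v \<in> carrier_vec n" and v0: "v \<noteq> 0\<^sub>v n"
  shows "\<exists>ws. length ws = n \<and> orthonormal n ws \<and> ws!0 = normalized v"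
proof -
  interpret cof_vec_space n "TYPE(complex)" .
  define b where "b = basis_completion v"
  from basis_completion[OF v v0, folded b_def]
  have b: "set b \<subseteq> carrier_vec n" "distinct b" "\<not> lin_dep (set b)" "length b = n" "hd b = v"
    by auto
  have n: "n > 0" using v v0 by (cases n) auto
  obtain vs where bv: "b = v # vs" using b(4,5) n by (cases b) auto
  define us where "us = gram_schmidt n b"
  from gram_schmidt_result[OF b(1) b(2) b(3) us_def]
  have us: "corthogonal us" "set us \<subseteq> carrier_vec n" "length us = n" using b(4) by auto
  have us0: "us ! 0 = v"
    using gram_schmidt_hd[OF v, of vs] us(3) n unfolding us_def bv by (metis hd_conv_nth list.size(3) not_less0)
  have uc: "us!i \<in> carrier_vec n" if "i < n" for i using us that by auto
  have orth: "cinner (us!i) (us!j) = 0" if "i < n" "j < n" "i \<noteq> j" for i j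
    using corthogonalD[OF us(1), of j i] cinner_cscalar_prod[of "us!i" "us!j"] uc[OF that(1)] uc[OF that(2)]
      that us(3) by auto
  have nz: "us!i \<noteq> 0\<^sub>v n" if "i < n" for i
    using corthogonalD[OF us(1), of i i] cinner_cscalar_prod[of "us!i" "us!i"] uc that us(3) by auto
  define ws where "ws = map normalized us"
  show ?thesis
  proof (intro exI conjI)
    show "length ws = n" "ws!0 = normalized v" using us us0 n by (auto simp: ws_def)
    show "orthonormal n ws"
      unfolding orthonormal_def
    proof (intro conjI allI impI)
      show "set ws \<subseteq> carrier_vec n" using us by (auto simp: ws_def normalized_def)
      fix i j assume "i < length ws" "j < length ws"
      then have i: "i < n" and j: "j < n" using us by (auto simp: ws_def)
      show "cinner (ws!i) (ws!j) = (if i = j then 1 else 0)"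
        using cinner_normalized[OF uc nz, of i] orth[OF i j] uc[OF i] uc[OF j] i j us(3)
        by (auto simp: ws_def normalized_def)
    qed
  qed
qed

lemma cinner_hd_mat_of_cols_tl:
  assumes ws: "orthonormal (Suc m) ws" "length ws = Suc m" and y: "y \<in> carrier_vec m"
  shows "cinner (ws!0) (mat_of_cols (Suc m) (tl ws) *\<^sub>v y) = 0"
proof -
  let ?V = "mat_of_cols (Suc m) (tl ws)"
  have V: "?V \<in> carrier_mat (Suc m) m" using mat_of_cols_carrier(1)[of "Suc m" "tl ws"] ws(2) by simp
  have w0: "ws!0 \<in> carrier_vec (Suc m)" using ws unfolding orthonormal_def by auto
  have "adj ?V *\<^sub>v (ws!0) = 0\<^sub>v m"
  proof (rule eq_vecI)
    fix k assume "k < dim_vec (0\<^sub>v m)"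
    then have k: "k < m" by simp
    have "col ?V k = ws ! Suc k" using orthonormal_col[OF orthonormal_tl[OF ws(1)]] ws(2) k by (simp add: nth_tl)
    then show "(adj ?V *\<^sub>v (ws!0)) $ k = 0\<^sub>v m $ k"
      using adj_mult_vec_index[OF V w0 k] ws k unfolding orthonormal_def by auto
  qed (use ws(2) in simp)
  then show ?thesis using cinner_adj[OF V w0 y] y by (simp add: cinner_def)
qed

lemma orthonormal_Cons_isometry:
  assumes u: "u \<in> carrier_vec n" "cinner u u = 1"
    and V: "V \<in> carrier_mat n m" "adj V * V = 1\<^sub>m m"
    and perp: "\<And>y. y \<in> carrier_vec m \<Longrightarrow> cinner u (V *\<^sub>v y) = 0"
    and us: "orthonormal m us"
  shows "orthonormal n (u # map (\<lambda>y. V *\<^sub>v y) us)"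
proof -
  have usc: "us!i \<in> carrier_vec m" if "i < length us" for i using us that unfolding orthonormal_def by auto
  have perp': "cinner (V *\<^sub>v y) u = 0" if "y \<in> carrier_vec m" for y
    using cinner_commute[of u "V *\<^sub>v y"] perp[OF that] u V that by simp
  show ?thesis unfolding orthonormal_def
  proof (intro conjI allI impI)
    show "set (u # map (\<lambda>y. V *\<^sub>v y) us) \<subseteq> carrier_vec n"
      using u V us unfolding orthonormal_def by auto
    fix i j assume "i < length (u # map (\<lambda>y. V *\<^sub>v y) us)" "j < length (u # map (\<lambda>y. V *\<^sub>v y) us)"
    then show "cinner ((u # map (\<lambda>y. V *\<^sub>v y) us) ! i) ((u # map (\<lambda>y. V *\<^sub>v y) us) ! j) = (if i = j then 1 else 0)"
      using u perp perp' usc isometry_cinner[OF V] us unfolding orthonormal_def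
      by (cases i; cases j) auto
  qed
qed

section \<open>The spectral theorem\<close>

lemma hermitian_eigenvalue_real:
  assumes A: "A \<in> carrier_mat n n" and hA: "adj A = A"
    and v: "v \<in> carrier_vec n" "v \<noteq> 0\<^sub>v n" and Av: "A *\<^sub>v v = e \<cdot>\<^sub>v v"
  shows "e = complex_of_real (Re e)"
proof -
  have "e * cinner v v = cnj e * cinner v v"
    using hermitian_cinner[OF A hA v(1) v(1)] Av v by simp
  moreover have "cinner v v \<noteq> 0" using cinner_self_eq_0 v by blast
  ultimately have "cnj e = e" by simp
  then show ?thesis by (metis Reals_cnj_iff of_real_Re)
qed

text \<open>Compare coordinates in the basis ws: along ws!0 both sides vanish, since A is Hermitian and
  A (ws!0) is parallel to ws!0, which is orthogonal to the range of V; the other coordinates are the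
  entries of (adj V * A * V) y = d y.\<close>

lemma compression_eigenvector:
  assumes A: "A \<in> carrier_mat (Suc m) (Suc m)" and hA: "adj A = A"
    and ws: "orthonormal (Suc m) ws" "length ws = Suc m" and Aw0: "A *\<^sub>v (ws!0) = e \<cdot>\<^sub>v (ws!0)"
    and V_def: "V = mat_of_cols (Suc m) (tl ws)"
    and y: "y \<in> carrier_vec m" and By: "(adj V * A * V) *\<^sub>v y = d \<cdot>\<^sub>v y"
  shows "A *\<^sub>v (V *\<^sub>v y) = d \<cdot>\<^sub>v (V *\<^sub>v y)"
proof (rule orthonormal_basis_eq[OF ws])
  have V: "V \<in> carrier_mat (Suc m) m" using mat_of_cols_carrier(1)[of "Suc m" "tl ws"] ws(2) V_def by simp
  have VV: "adj V * V = 1\<^sub>m m"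
    using orthonormal_adj_mult[OF orthonormal_tl[OF ws(1)]] ws(2) V_def by simp
  have coord: "cinner (ws ! Suc k) x = (adj V *\<^sub>v x) $ k" if "k < m" "x \<in> carrier_vec (Suc m)" for k x
    using adj_mult_vec_index[OF V that(2) that(1)] orthonormal_col[OF orthonormal_tl[OF ws(1)]] ws(2) that(1)
    by (simp add: V_def nth_tl)
  have w0: "ws!0 \<in> carrier_vec (Suc m)" using ws unfolding orthonormal_def by auto
  have Vy: "V *\<^sub>v y \<in> carrier_vec (Suc m)" using V y by simp
  have AVy: "A *\<^sub>v (V *\<^sub>v y) \<in> carrier_vec (Suc m)" using A Vy by simp
  have perp: "cinner (ws!0) (V *\<^sub>v y) = 0" using cinner_hd_mat_of_cols_tl[OF ws y] V_def by simp
  have "(adj V * A * V) *\<^sub>v y = (adj V * A) *\<^sub>v (V *\<^sub>v y)"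
    by (rule assoc_mult_mat_vec[of _ m "Suc m" _ m]) (use V A y in auto)
  also have "\<dots> = adj V *\<^sub>v (A *\<^sub>v (V *\<^sub>v y))"
    by (rule assoc_mult_mat_vec[of _ m "Suc m" _ "Suc m"]) (use V A y in auto)
  finally have BV: "adj V *\<^sub>v (A *\<^sub>v (V *\<^sub>v y)) = d \<cdot>\<^sub>v y" using By by simp
  have VVy: "adj V *\<^sub>v (V *\<^sub>v y) = y"
    using VV V y by (simp flip: assoc_mult_mat_vec[of _ m "Suc m" _ m])
  show "A *\<^sub>v (V *\<^sub>v y) \<in> carrier_vec (Suc m)" "d \<cdot>\<^sub>v (V *\<^sub>v y) \<in> carrier_vec (Suc m)" using AVy Vy by auto
  fix l assume l: "l < Suc m"
  show "cinner (ws!l) (A *\<^sub>v (V *\<^sub>v y)) = cinner (ws!l) (d \<cdot>\<^sub>v (V *\<^sub>v y))"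
  proof (cases l)
    case 0
    have "cinner (ws!0) (A *\<^sub>v (V *\<^sub>v y)) = cnj e * cinner (ws!0) (V *\<^sub>v y)"
      using hermitian_cinner[OF A hA w0 Vy] Aw0 carrier_vecD[OF w0] carrier_vecD[OF Vy] by simp
    then show ?thesis using 0 perp by simp
  next
    case (Suc k)
    then have k: "k < m" using l by simp
    have "cinner (ws!l) (A *\<^sub>v (V *\<^sub>v y)) = d * y $ k" using coord[OF k AVy] BV Suc k y by simp
    also have "\<dots> = cinner (ws!l) (d \<cdot>\<^sub>v (V *\<^sub>v y))" using coord[OF k Vy] VVy Suc by simp
    finally show ?thesis .
  qed
qed

lemma orthonormal_basis_hd_eigenvector:
  assumes A: "A \<in> carrier_mat (Suc m) (Suc m)" and hA: "adj A = A"
  obtains ws e where "length ws = Suc m" "orthonormal (Suc m) ws"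
    "A *\<^sub>v (ws!0) = complex_of_real e \<cdot>\<^sub>v (ws!0)"
proof -
  obtain e v where v: "v \<in> carrier_vec (Suc m)" "v \<noteq> 0\<^sub>v (Suc m)" "A *\<^sub>v v = e \<cdot>\<^sub>v v"
    using spectrum_non_empty[OF A] A by (auto simp: spectrum_def eigenvalue_def eigenvector_def)
  have e: "e = complex_of_real (Re e)" by (rule hermitian_eigenvalue_real[OF A hA v])
  obtain ws where ws: "length ws = Suc m" "orthonormal (Suc m) ws" "ws!0 = normalized v"
    using orthonormal_completion[OF v(1,2)] by blast
  have "A *\<^sub>v (ws!0) = e \<cdot>\<^sub>v (ws!0)"
    using ws(3) v A by (simp add: normalized_def mult_mat_vec smult_smult_assoc mult.commute)
  then show ?thesis using that[OF ws(1,2)] e by metis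
qed

lemma hermitian_eigenbasis:
  assumes "A \<in> carrier_mat n n" "adj A = A"
  shows "\<exists>us ds. length us = n \<and> length ds = n \<and> orthonormal n us \<and>
     (\<forall>i<n. A *\<^sub>v (us!i) = complex_of_real (ds!i) \<cdot>\<^sub>v (us!i))"
  using assms
proof (induction n arbitrary: A)
  case 0
  then show ?case by (intro exI[of _ "[]"]) (auto simp: orthonormal_def)
next
  case (Suc m)
  have A: "A \<in> carrier_mat (Suc m) (Suc m)" and hA: "adj A = A" by fact+
  obtain ws e where ws: "length ws = Suc m" "orthonormal (Suc m) ws"
    and Aw0: "A *\<^sub>v (ws!0) = complex_of_real e \<cdot>\<^sub>v (ws!0)"
    using orthonormal_basis_hd_eigenvector[OF A hA] by blast
  have w0: "ws!0 \<in> carrier_vec (Suc m)" "cinner (ws!0) (ws!0) = 1"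
    using ws(1,2) unfolding orthonormal_def by auto
  define V where "V = mat_of_cols (Suc m) (tl ws)"
  have V: "V \<in> carrier_mat (Suc m) m" using mat_of_cols_carrier(1)[of "Suc m" "tl ws"] ws(1) V_def by simp
  have VV: "adj V * V = 1\<^sub>m m"
    using orthonormal_adj_mult[OF orthonormal_tl[OF ws(2)]] ws(1) V_def by simp
  have B: "adj V * A * V \<in> carrier_mat m m" using V A by (metis adj_carrier_mat mult_carrier_mat)
  obtain us ds where IH: "length us = m" "length ds = m" "orthonormal m us"
    "\<And>i. i < m \<Longrightarrow> (adj V * A * V) *\<^sub>v (us!i) = complex_of_real (ds!i) \<cdot>\<^sub>v (us!i)"
    using Suc.IH[OF B hermitian_congruence[OF A hA V]] by blast
  show ?case
  proof (intro exI conjI allI impI)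
    show "length (ws!0 # map (\<lambda>y. V *\<^sub>v y) us) = Suc m" "length (e # ds) = Suc m" using IH by auto
    show "orthonormal (Suc m) (ws!0 # map (\<lambda>y. V *\<^sub>v y) us)"
      using orthonormal_Cons_isometry[OF w0 V VV _ IH(3)] cinner_hd_mat_of_cols_tl[OF ws(2,1)] V_def by simp
    fix i assume i: "i < Suc m"
    show "A *\<^sub>v ((ws!0 # map (\<lambda>y. V *\<^sub>v y) us) ! i) =
      complex_of_real ((e # ds) ! i) \<cdot>\<^sub>v ((ws!0 # map (\<lambda>y. V *\<^sub>v y) us) ! i)"
    proof (cases i)
      case 0
      then show ?thesis using Aw0 by simp
    next
      case (Suc k)
      then have k: "k < m" using i by simp
      have "us!k \<in> carrier_vec m" using IH(1,3) k unfolding orthonormal_def by auto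
      then show ?thesis using compression_eigenvector[OF A hA ws(2,1) Aw0 V_def _ IH(4)[OF k]] Suc k IH(1) by simp
    qed
  qed
qed

definition real_diag :: "nat \<Rightarrow> (nat \<Rightarrow> real) \<Rightarrow> complex mat" where
  "real_diag n f = mat n n (\<lambda>(i,j). if i = j then complex_of_real (f i) else 0)"

definition unitary :: "nat \<Rightarrow> complex mat \<Rightarrow> bool" where
  "unitary n U \<longleftrightarrow> U \<in> carrier_mat n n \<and> adj U * U = 1\<^sub>m n \<and> U * adj U = 1\<^sub>m n"

lemma real_diag_carrier[simp]:
  "real_diag n f \<in> carrier_mat n n" "dim_row (real_diag n f) = n" "dim_col (real_diag n f) = n"
  by (auto simp: real_diag_def)

lemma real_diag_index[simp]:
  "i < n \<Longrightarrow> j < n \<Longrightarrow> real_diag n f $$ (i,j) = (if i = j then complex_of_real (f i) else 0)"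
  by (simp add: real_diag_def)

lemma adj_real_diag[simp]: "adj (real_diag n f) = real_diag n f"
  by (rule eq_matI) (auto simp: real_diag_def)

lemma real_diag_cong: "(\<And>i. i < n \<Longrightarrow> f i = g i) \<Longrightarrow> real_diag n f = real_diag n g"
  by (rule eq_matI) auto

lemma real_diag_mult_vec:
  "c \<in> carrier_vec n \<Longrightarrow> real_diag n f *\<^sub>v c = vec n (\<lambda>i. complex_of_real (f i) * c $ i)"
  by (rule eq_vecI) (auto simp: real_diag_def scalar_prod_def if_distrib[of "\<lambda>x. x * _"] cong: if_cong)

lemma real_diag_mult_vec_carrier[simp]: "c \<in> carrier_vec n \<Longrightarrow> real_diag n f *\<^sub>v c \<in> carrier_vec n"
  by (simp add: real_diag_mult_vec)

lemma real_diag_mult: "real_diag n f * real_diag n g = real_diag n (\<lambda>i. f i * g i)"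
  by (rule eq_matI) (auto simp: real_diag_def scalar_prod_def if_distrib[of "\<lambda>x. x * _"] cong: if_cong)

lemma real_diag_one: "real_diag n (\<lambda>_. 1) = 1\<^sub>m n"
  by (rule eq_matI) auto

lemma real_diag_zero: "real_diag n (\<lambda>_. 0) = 0\<^sub>m n n"
  by (rule eq_matI) auto

lemma unitaryD: "unitary n U \<Longrightarrow> U \<in> carrier_mat n n" "unitary n U \<Longrightarrow> adj U * U = 1\<^sub>m n"
  "unitary n U \<Longrightarrow> U * adj U = 1\<^sub>m n"
  by (auto simp: unitary_def)

lemma unitary_adj_mult_vec: assumes "unitary n U" "x \<in> carrier_vec n"
  shows "U *\<^sub>v (adj U *\<^sub>v x) = x" "adj U *\<^sub>v (U *\<^sub>v x) = x"
proof -
  have U: "U \<in> carrier_mat n n" using unitaryD(1)[OF assms(1)] .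
  show "U *\<^sub>v (adj U *\<^sub>v x) = x"
    using unitaryD(3)[OF assms(1)] U assms(2) by (simp flip: assoc_mult_mat_vec[of _ n n _ n])
  show "adj U *\<^sub>v (U *\<^sub>v x) = x"
    using unitaryD(2)[OF assms(1)] U assms(2) by (simp flip: assoc_mult_mat_vec[of _ n n _ n])
qed

lemma unitary_adj_mult_vec_nonzero:
  assumes "unitary n U" "x \<in> carrier_vec n" "x \<noteq> 0\<^sub>v n"
  shows "\<exists>k<n. (adj U *\<^sub>v x) $ k \<noteq> 0"
proof (rule ccontr)
  have U: "U \<in> carrier_mat n n" using unitaryD(1)[OF assms(1)] .
  assume "\<not> (\<exists>k<n. (adj U *\<^sub>v x) $ k \<noteq> 0)"
  then have "adj U *\<^sub>v x = 0\<^sub>v n" using U by (intro eq_vecI) auto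
  then have "U *\<^sub>v (adj U *\<^sub>v x) = 0\<^sub>v n" using U by simp
  then show False using unitary_adj_mult_vec(1)[OF assms(1,2)] assms(3) by simp
qed

lemma unitary_mat_of_cols: "orthonormal n ws \<Longrightarrow> length ws = n \<Longrightarrow> unitary n (mat_of_cols n ws)"
  unfolding unitary_def using orthonormal_unitary[of n ws] by auto

lemma cinner_self_unitary_coords: assumes "unitary n U" "x \<in> carrier_vec n"
  shows "Re (cinner x x) = (\<Sum>i<n. (cmod ((adj U *\<^sub>v x) $ i))\<^sup>2)"
proof -
  have U: "U \<in> carrier_mat n n" using unitaryD(1)[OF assms(1)] .
  have "cinner x x = cinner (U *\<^sub>v (adj U *\<^sub>v x)) (U *\<^sub>v (adj U *\<^sub>v x))"
    using unitary_adj_mult_vec(1)[OF assms] by simp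
  also have "\<dots> = cinner (adj U *\<^sub>v x) (adj U *\<^sub>v x)"
    by (rule isometry_cinner[OF U unitaryD(2)[OF assms(1)]]) (use U assms(2) in auto)
  finally show ?thesis using U by (simp add: cinner_self_Re)
qed

lemma unitary_diag_carrier[simp]: "unitary n U \<Longrightarrow> U * real_diag n f * adj U \<in> carrier_mat n n"
  using unitaryD(1) by (metis adj_carrier_mat real_diag_carrier(1) mult_carrier_mat)

lemma unitary_diag_mult_vec: assumes "unitary n U" "x \<in> carrier_vec n"
  shows "(U * real_diag n f * adj U) *\<^sub>v x = U *\<^sub>v (real_diag n f *\<^sub>v (adj U *\<^sub>v x))"
proof -
  have U: "U \<in> carrier_mat n n" using unitaryD(1)[OF assms(1)] .
  have "(U * real_diag n f * adj U) *\<^sub>v x = (U * real_diag n f) *\<^sub>v (adj U *\<^sub>v x)"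
    by (rule assoc_mult_mat_vec[of _ n n _ n]) (use U assms in auto)
  also have "\<dots> = U *\<^sub>v (real_diag n f *\<^sub>v (adj U *\<^sub>v x))"
    by (rule assoc_mult_mat_vec[of _ n n _ n]) (use U assms in auto)
  finally show ?thesis .
qed

lemma unitary_diag_col: assumes "unitary n U" "i < n"
  shows "(U * real_diag n f * adj U) *\<^sub>v col U i = complex_of_real (f i) \<cdot>\<^sub>v col U i"
proof -
  have U: "U \<in> carrier_mat n n" using unitaryD(1)[OF assms(1)] .
  have "adj U *\<^sub>v col U i = col (adj U * U) i" using U assms by (intro col_mult2[symmetric]) auto
  then have c: "adj U *\<^sub>v col U i = unit_vec n i" using unitaryD(2)[OF assms(1)] assms(2) by simp
  have d: "real_diag n f *\<^sub>v unit_vec n i = complex_of_real (f i) \<cdot>\<^sub>v unit_vec n i"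
    using assms(2) by (auto simp: real_diag_mult_vec intro!: eq_vecI)
  have Ue: "U *\<^sub>v unit_vec n i = col U i" using U assms(2) by (intro eq_vecI) auto
  have "(U * real_diag n f * adj U) *\<^sub>v col U i = U *\<^sub>v (real_diag n f *\<^sub>v unit_vec n i)"
    using unitary_diag_mult_vec[OF assms(1), of "col U i" f] c U assms(2) by simp
  also have "\<dots> = complex_of_real (f i) \<cdot>\<^sub>v col U i"
    unfolding d mult_mat_vec[OF U unit_vec_carrier] Ue ..
  finally show ?thesis .
qed

lemma cinner_unitary_col: assumes "unitary n U" "i < n" shows "cinner (col U i) (col U i) = 1"
  using adj_mult_index[OF unitaryD(1)[OF assms(1)] unitaryD(1)[OF assms(1)] assms(2,2)]
    unitaryD(2)[OF assms(1)] assms(2) by simp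

lemma unitary_col_nonzero: "unitary n U \<Longrightarrow> i < n \<Longrightarrow> col U i \<noteq> 0\<^sub>v n"
  using cinner_unitary_col[of n U i] by auto

lemma hermitian_unitary_diag: assumes A: "A \<in> carrier_mat n n" and h: "adj A = A"
  shows "\<exists>U f. unitary n U \<and> A = U * real_diag n f * adj U"
proof -
  obtain us ds where us: "length us = n" "length ds = n" "orthonormal n us"
    "\<And>i. i < n \<Longrightarrow> A *\<^sub>v (us!i) = complex_of_real (ds!i) \<cdot>\<^sub>v (us!i)"
    using hermitian_eigenbasis[OF A h] by blast
  define U where "U = mat_of_cols n us"
  have un: "unitary n U" using unitary_mat_of_cols[OF us(3,1)] by (simp add: U_def)
  have U: "U \<in> carrier_mat n n" using unitaryD(1)[OF un] .
  have AU: "A * U = U * real_diag n (\<lambda>i. ds ! i)"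
  proof (rule eq_matI)
    fix i j assume "i < dim_row (U * real_diag n (\<lambda>i. ds ! i))" "j < dim_col (U * real_diag n (\<lambda>i. ds ! i))"
    then have i: "i < n" and j: "j < n" using U by auto
    have colU: "col U j = us ! j" using orthonormal_col[OF us(3)] j us(1) by (simp add: U_def)
    have "(A * U) $$ (i,j) = (A *\<^sub>v col U j) $ i" using i j A U by simp
    also have "\<dots> = complex_of_real (ds ! j) * U $$ (i,j)"
    proof -
      have uj: "us!j \<in> carrier_vec n" using us(1,3) j unfolding orthonormal_def by auto
      have "U $$ (i,j) = us!j $ i" using colU i j U by (metis carrier_matD index_col)
      then show ?thesis using us(4)[OF j] colU uj i by simp
    qed
    also have "\<dots> = (U * real_diag n (\<lambda>i. ds ! i)) $$ (i,j)"
      using i j U by (auto simp: scalar_prod_def if_distrib[of "\<lambda>x. _ * x"] cong: if_cong)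
    finally show "(A * U) $$ (i,j) = (U * real_diag n (\<lambda>i. ds ! i)) $$ (i,j)" .
  qed (use A U in auto)
  have "A = (A * U) * adj U" using unitaryD(3)[OF un] A U by (simp add: assoc_mult_mat[of _ n n _ n _ n])
  then show ?thesis using AU un by auto
qed

lemma rspec_unitary_diag: assumes "unitary n U"
  shows "rspec (U * real_diag n f * adj U) = f ` {..<n}"
proof
  have U: "U \<in> carrier_mat n n" using unitaryD(1)[OF assms] .
  show "f ` {..<n} \<subseteq> rspec (U * real_diag n f * adj U)"
  proof
    fix r assume "r \<in> f ` {..<n}"
    then obtain i where i: "i < n" "r = f i" by auto
    then show "r \<in> rspec (U * real_diag n f * adj U)"
      unfolding rspec_def eigenvalue_def eigenvector_def
      using unitary_diag_col[OF assms i(1)] unitary_col_nonzero[OF assms i(1)] U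
      by (intro CollectI exI[of _ "col U i"]) auto
  qed
  show "rspec (U * real_diag n f * adj U) \<subseteq> f ` {..<n}"
  proof
    fix r assume "r \<in> rspec (U * real_diag n f * adj U)"
    then obtain v where v: "v \<in> carrier_vec n" "v \<noteq> 0\<^sub>v n"
      "(U * real_diag n f * adj U) *\<^sub>v v = complex_of_real r \<cdot>\<^sub>v v"
      unfolding rspec_def eigenvalue_def eigenvector_def using U by auto
    define c where "c = adj U *\<^sub>v v"
    have c: "c \<in> carrier_vec n" using U v by (simp add: c_def)
    obtain k where k: "k < n" "c $ k \<noteq> 0" using unitary_adj_mult_vec_nonzero[OF assms v(1,2)] c_def by blast
    have "adj U *\<^sub>v (U *\<^sub>v (real_diag n f *\<^sub>v c)) = adj U *\<^sub>v (complex_of_real r \<cdot>\<^sub>v v)"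
      using v(3) unitary_diag_mult_vec[OF assms v(1)] by (simp add: c_def)
    then have "real_diag n f *\<^sub>v c = complex_of_real r \<cdot>\<^sub>v c"
      using unitary_adj_mult_vec(2)[OF assms] c mult_mat_vec[of "adj U" n n v] U v by (simp add: c_def)
    then have "(real_diag n f *\<^sub>v c) $ k = (complex_of_real r \<cdot>\<^sub>v c) $ k" by simp
    then have "complex_of_real (f k) * c $ k = complex_of_real r * c $ k"
      using k c by (simp add: real_diag_mult_vec)
    then show "r \<in> f ` {..<n}" using k by auto
  qed
qed

lemma adj_unitary_diag: assumes "unitary n U"
  shows "adj (U * real_diag n f * adj U) = U * real_diag n f * adj U"
  using hermitian_congruence[of "real_diag n f" n "adj U" n] unitaryD(1)[OF assms] by simp

lemma unitary_diag_mult: assumes "unitary n U"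
  shows "(U * real_diag n f * adj U) * (U * real_diag n g * adj U) = U * real_diag n (\<lambda>i. f i * g i) * adj U"
proof -
  have U: "U \<in> carrier_mat n n" using unitaryD(1)[OF assms] .
  have UU: "adj U * (U * X) = X" if "X \<in> carrier_mat n n" for X
    using that U unitaryD(2)[OF assms] by (simp flip: assoc_mult_mat[of _ n n _ n _ n])
  have DD: "real_diag n f * (real_diag n g * adj U) = real_diag n (\<lambda>i. f i * g i) * adj U"
    using U by (simp flip: assoc_mult_mat[of _ n n _ n _ n] add: real_diag_mult)
  show ?thesis using U by (simp add: assoc_mult_mat[of _ n n _ n _ n] mult_carrier_mat[of _ n n _ n] UU DD)
qed

lemma unitary_diag_one: assumes "unitary n U" "\<And>i. i < n \<Longrightarrow> f i = 1"
  shows "U * real_diag n f * adj U = 1\<^sub>m n"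
proof -
  have "real_diag n f = 1\<^sub>m n" using real_diag_cong[of n f "\<lambda>_. 1"] assms(2) real_diag_one by simp
  then show ?thesis using unitaryD[OF assms(1)] by simp
qed

lemma unitary_diag_zero: assumes "unitary n U" "\<And>i. i < n \<Longrightarrow> f i = 0"
  shows "U * real_diag n f * adj U = 0\<^sub>m n n"
proof -
  have "real_diag n f = 0\<^sub>m n n" using real_diag_cong[of n f "\<lambda>_. 0"] assms(2) real_diag_zero by simp
  then show ?thesis using unitaryD(1)[OF assms(1)] by simp
qed

definition quad_form :: "complex mat \<Rightarrow> complex vec \<Rightarrow> complex" where
  "quad_form A v = cinner v (A *\<^sub>v v)"

lemma psd_iff_quad_form:
  "A \<in> carrier_mat n n \<Longrightarrow> psd A \<longleftrightarrow> adj A = A \<and> (\<forall>v\<in>carrier_vec n. 0 \<le> Re (quad_form A v))"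
  by (auto simp: psd_def hermitian_def quad_form_def conjugate_scalar_prod_cinner)


lemma smult_mat_mult_vec: "M \<in> carrier_mat n m \<Longrightarrow> x \<in> carrier_vec m \<Longrightarrow> (c \<cdot>\<^sub>m M) *\<^sub>v x = c \<cdot>\<^sub>v (M *\<^sub>v x)"
  by (rule eq_vecI) (auto simp: scalar_prod_def sum_distrib_left ac_simps)

lemma quad_form_smult_mat: "M \<in> carrier_mat n n \<Longrightarrow> x \<in> carrier_vec n \<Longrightarrow> quad_form (c \<cdot>\<^sub>m M) x = c * quad_form M x"
  by (simp add: quad_form_def smult_mat_mult_vec)

lemma quad_form_smult_vec: assumes A: "A \<in> carrier_mat n n" and x: "x \<in> carrier_vec n"
  shows "quad_form A (c \<cdot>\<^sub>v x) = cnj c * c * quad_form A x"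
  using A x by (simp add: quad_form_def mult_mat_vec)

lemma quad_form_congruence:
  assumes S: "S \<in> carrier_mat n n" and A: "A \<in> carrier_mat n n" and w: "w \<in> carrier_vec n"
  shows "quad_form (adj S * A * S) w = quad_form A (S *\<^sub>v w)"
proof -
  have "(adj S * A * S) *\<^sub>v w = (adj S * A) *\<^sub>v (S *\<^sub>v w)"
    by (rule assoc_mult_mat_vec[of _ n n _ n]) (use S A w in auto)
  also have "\<dots> = adj S *\<^sub>v (A *\<^sub>v (S *\<^sub>v w))"
    by (rule assoc_mult_mat_vec[of _ n n _ n]) (use S A w in auto)
  finally have "(adj S * A * S) *\<^sub>v w = adj S *\<^sub>v (A *\<^sub>v (S *\<^sub>v w))" .
  then show ?thesis using cinner_adj[OF adj_carrier_mat[OF S], of w "A *\<^sub>v (S *\<^sub>v w)"] S A w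
    by (simp add: quad_form_def)
qed

lemma quad_form_unitary_diag: assumes "unitary n U" "x \<in> carrier_vec n"
  shows "quad_form (U * real_diag n f * adj U) x = complex_of_real (\<Sum>i<n. f i * (cmod ((adj U *\<^sub>v x) $ i))\<^sup>2)"
proof -
  have U: "U \<in> carrier_mat n n" using unitaryD(1)[OF assms(1)] .
  define c where "c = adj U *\<^sub>v x"
  have c: "c \<in> carrier_vec n" using U assms by (simp add: c_def)
  have "quad_form (U * real_diag n f * adj U) x = cinner (U *\<^sub>v c) (U *\<^sub>v (real_diag n f *\<^sub>v c))"
    unfolding quad_form_def unitary_diag_mult_vec[OF assms] c_def unitary_adj_mult_vec(1)[OF assms] ..
  also have "\<dots> = cinner c (real_diag n f *\<^sub>v c)"
    by (rule isometry_cinner[OF U unitaryD(2)[OF assms(1)] c]) (use c in simp)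
  also have "\<dots> = (\<Sum>i<n. complex_of_real (f i) * (cnj (c $ i) * c $ i))"
    using c by (simp add: cinner_def real_diag_mult_vec ac_simps)
  also have "\<dots> = (\<Sum>i<n. complex_of_real (f i * (cmod (c $ i))\<^sup>2))"
    by (intro sum.cong refl) (metis complex_norm_square mult.commute of_real_mult)
  finally show ?thesis by (simp add: c_def)
qed

lemma quad_form_unitary_col: assumes "unitary n U" "i < n"
  shows "quad_form (U * real_diag n f * adj U) (col U i) = complex_of_real (f i)"
  unfolding quad_form_def unitary_diag_col[OF assms] using cinner_unitary_col[OF assms] by simp

lemma psd_unitary_diag_nonneg: assumes "unitary n U" "psd (U * real_diag n f * adj U)" "i < n"
  shows "0 \<le> f i"
proof -
  have "col U i \<in> carrier_vec n" using unitaryD(1)[OF assms(1)] assms(3) by simp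
  then have "0 \<le> Re (quad_form (U * real_diag n f * adj U) (col U i))"
    using assms(2) psd_iff_quad_form[OF unitary_diag_carrier[OF assms(1)]] by blast
  then show ?thesis using quad_form_unitary_col[OF assms(1,3)] by simp
qed

lemma det_unitary_diag_nonzero: assumes "unitary n U" "det (U * real_diag n f * adj U) \<noteq> 0" "i < n"
  shows "f i \<noteq> 0"
proof
  assume "f i = 0"
  have c: "col U i \<in> carrier_vec n" using unitaryD(1)[OF assms(1)] assms(3) by simp
  have "(U * real_diag n f * adj U) *\<^sub>v col U i = 0 \<cdot>\<^sub>v col U i"
    using unitary_diag_col[OF assms(1,3), of f] \<open>f i = 0\<close> by simp
  also have "\<dots> = 0\<^sub>v n" using unitaryD(1)[OF assms(1)] by (intro eq_vecI) auto
  finally have "(U * real_diag n f * adj U) *\<^sub>v col U i = 0\<^sub>v n" .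
  then have "det (U * real_diag n f * adj U) = 0"
    using det_0_iff_vec_prod_zero[OF unitary_diag_carrier[OF assms(1)]] unitary_col_nonzero[OF assms(1,3)] c
    by blast
  then show False using assms(2) by simp
qed

lemma quad_form_unitary_diag_pos:
  assumes "unitary n U" "\<And>i. i < n \<Longrightarrow> 0 < f i" "x \<in> carrier_vec n" "x \<noteq> 0\<^sub>v n"
  shows "0 < Re (quad_form (U * real_diag n f * adj U) x)"
proof -
  obtain k where k: "k < n" "(adj U *\<^sub>v x) $ k \<noteq> 0" using unitary_adj_mult_vec_nonzero[OF assms(1,3,4)] by blast
  have "0 < f k * (cmod ((adj U *\<^sub>v x) $ k))\<^sup>2" using assms(2)[OF k(1)] k(2) by simp
  also have "\<dots> \<le> (\<Sum>i<n. f i * (cmod ((adj U *\<^sub>v x) $ i))\<^sup>2)"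
    by (rule member_le_sum) (auto simp: k intro!: mult_nonneg_nonneg less_imp_le[OF assms(2)])
  finally show ?thesis unfolding quad_form_unitary_diag[OF assms(1,3)] by simp
qed

lemma det_nonzero_if_quad_form_pos:
  assumes "A \<in> carrier_mat n n" "\<And>x. x \<in> carrier_vec n \<Longrightarrow> x \<noteq> 0\<^sub>v n \<Longrightarrow> 0 < Re (quad_form A x)"
  shows "det A \<noteq> 0"
proof
  assume "det A = 0"
  then obtain v where v: "v \<in> carrier_vec n" "v \<noteq> 0\<^sub>v n" "A *\<^sub>v v = 0\<^sub>v n"
    using det_0_iff_vec_prod_zero[OF assms(1)] by auto
  have "quad_form A v = 0" using v by (simp add: quad_form_def)
  then show False using assms(2)[OF v(1,2)] by simp
qed

lemma pd_iff_quad_form: assumes A: "A \<in> carrier_mat n n"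
  shows "pd A \<longleftrightarrow> adj A = A \<and> (\<forall>x\<in>carrier_vec n. x \<noteq> 0\<^sub>v n \<longrightarrow> 0 < Re (quad_form A x))"
proof
  assume pd: "pd A"
  then have h: "adj A = A" using psd_iff_quad_form[OF A] by (auto simp: pd_def)
  obtain U f where U: "unitary n U" "A = U * real_diag n f * adj U" using hermitian_unitary_diag[OF A h] by blast
  have "0 < f i" if "i < n" for i
    using psd_unitary_diag_nonneg[OF U(1) _ that] det_unitary_diag_nonzero[OF U(1) _ that] pd U(2)
    unfolding pd_def by force
  then show "adj A = A \<and> (\<forall>x\<in>carrier_vec n. x \<noteq> 0\<^sub>v n \<longrightarrow> 0 < Re (quad_form A x))"
    using h quad_form_unitary_diag_pos[OF U(1)] U(2) by auto
next
  assume r: "adj A = A \<and> (\<forall>x\<in>carrier_vec n. x \<noteq> 0\<^sub>v n \<longrightarrow> 0 < Re (quad_form A x))"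
  have "0 \<le> Re (quad_form A v)" if "v \<in> carrier_vec n" for v
    using r that A by (cases "v = 0\<^sub>v n") (auto simp: quad_form_def intro: less_imp_le)
  then have "psd A" using psd_iff_quad_form[OF A] r by auto
  moreover have "det A \<noteq> 0" using det_nonzero_if_quad_form_pos[OF A] r by blast
  ultimately show "pd A" by (simp add: pd_def)
qed

lemma pd_hermitian: "A \<in> carrier_mat n n \<Longrightarrow> pd A \<Longrightarrow> adj A = A"
  using pd_iff_quad_form by blast

lemma pd_quad_form_pos:
  "A \<in> carrier_mat n n \<Longrightarrow> pd A \<Longrightarrow> x \<in> carrier_vec n \<Longrightarrow> x \<noteq> 0\<^sub>v n \<Longrightarrow> 0 < Re (quad_form A x)"
  using pd_iff_quad_form by blast

lemma pd_quad_form_nonneg: "A \<in> carrier_mat n n \<Longrightarrow> pd A \<Longrightarrow> x \<in> carrier_vec n \<Longrightarrow> 0 \<le> Re (quad_form A x)"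
  using pd_quad_form_pos[of A n x] by (cases "x = 0\<^sub>v n") (auto simp: quad_form_def intro: less_imp_le)

lemma pd_unitary_diag_pos: assumes "unitary n U" "pd (U * real_diag n f * adj U)" "i < n" shows "0 < f i"
  using psd_unitary_diag_nonneg[OF assms(1) _ assms(3)] det_unitary_diag_nonzero[OF assms(1) _ assms(3)] assms(2)
  unfolding pd_def by force

lemma pd_unitary_diag: assumes "unitary n U" "\<And>i. i < n \<Longrightarrow> 0 < f i" shows "pd (U * real_diag n f * adj U)"
  unfolding pd_iff_quad_form[OF unitary_diag_carrier[OF assms(1)]]
  using adj_unitary_diag[OF assms(1)] quad_form_unitary_diag_pos[OF assms] by auto

lemma lambda_max_min_rayleigh: assumes A: "A \<in> carrier_mat n n" and h: "adj A = A" and n: "0 < n"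
  shows "lambda_max A \<in> rspec A"
    "\<And>x. x \<in> carrier_vec n \<Longrightarrow> Re (quad_form A x) \<le> lambda_max A * Re (cinner x x)"
    "\<And>x. x \<in> carrier_vec n \<Longrightarrow> lambda_min A * Re (cinner x x) \<le> Re (quad_form A x)"
proof -
  obtain U f where U: "unitary n U" "A = U * real_diag n f * adj U" using hermitian_unitary_diag[OF A h] by blast
  have rs: "rspec A = f ` {..<n}" using rspec_unitary_diag[OF U(1)] U(2) by simp
  have fin: "finite (rspec A)" and ne: "rspec A \<noteq> {}" using rs n by auto
  show "lambda_max A \<in> rspec A" unfolding lambda_max_def using Max_in[OF fin ne] .
  have fle: "f i \<le> lambda_max A" "lambda_min A \<le> f i" if "i < n" for i
    unfolding lambda_max_def lambda_min_def using rs that fin by auto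
  fix x :: "complex vec" assume x: "x \<in> carrier_vec n"
  define c where "c = adj U *\<^sub>v x"
  have q: "Re (quad_form A x) = (\<Sum>i<n. f i * (cmod (c $ i))\<^sup>2)"
    using quad_form_unitary_diag[OF U(1) x] U(2) by (simp add: c_def)
  have p: "Re (cinner x x) = (\<Sum>i<n. (cmod (c $ i))\<^sup>2)"
    using cinner_self_unitary_coords[OF U(1) x] by (simp add: c_def)
  have "(\<Sum>i<n. f i * (cmod (c $ i))\<^sup>2) \<le> (\<Sum>i<n. lambda_max A * (cmod (c $ i))\<^sup>2)"
    by (rule sum_mono) (auto intro!: mult_right_mono fle)
  then show "Re (quad_form A x) \<le> lambda_max A * Re (cinner x x)" unfolding q p by (simp add: sum_distrib_left)
  have "(\<Sum>i<n. lambda_min A * (cmod (c $ i))\<^sup>2) \<le> (\<Sum>i<n. f i * (cmod (c $ i))\<^sup>2)"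
    by (rule sum_mono) (auto intro!: mult_right_mono fle)
  then show "lambda_min A * Re (cinner x x) \<le> Re (quad_form A x)" unfolding q p by (simp add: sum_distrib_left)
qed

lemma pd_lambda_max_pos: assumes A: "A \<in> carrier_mat n n" and pd: "pd A" and n: "0 < n"
  shows "0 < lambda_max A"
proof -
  let ?e = "unit_vec n 0"
  have "0 < Re (quad_form A ?e)" using pd_quad_form_pos[OF A pd] n by simp
  also have "\<dots> \<le> lambda_max A * Re (cinner ?e ?e)"
    using lambda_max_min_rayleigh(2)[OF A pd_hermitian[OF A pd] n] by simp
  finally show ?thesis using cinner_self_pos[of ?e n] n by (simp add: zero_less_mult_iff)
qed

section \<open>The inverse square root\<close>

text \<open>If B B = C C, then for an eigenvector v of B - C with eigenvalue \<mu>,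
  0 = <v, (B B - C C) v> = <v, B (B - C) v> + <v, (B - C) C v> = \<mu> (<v, B v> + <v, C v>).\<close>

lemma pd_square_eq_diff_eigenvalue:
  assumes B: "B \<in> carrier_mat n n" and C: "C \<in> carrier_mat n n" and pB: "pd B" and pC: "pd C"
    and BBCC: "B * B = C * C"
    and v: "v \<in> carrier_vec n" "v \<noteq> 0\<^sub>v n" and Ev: "(B - C) *\<^sub>v v = complex_of_real \<mu> \<cdot>\<^sub>v v"
  shows "\<mu> = 0"
proof -
  let ?E = "B - C"
  have E: "?E \<in> carrier_mat n n" by (rule minus_carrier_mat[OF C])
  have hE: "adj ?E = ?E" using adj_minus[OF B C] pd_hermitian[OF B pB] pd_hermitian[OF C pC] by simp
  have Ew: "?E *\<^sub>v w = B *\<^sub>v w - C *\<^sub>v w" if "w \<in> carrier_vec n" for w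
    by (rule minus_mult_distrib_mat_vec[OF B C that])
  have BBv: "B *\<^sub>v (B *\<^sub>v v) = C *\<^sub>v (C *\<^sub>v v)"
    using assoc_mult_mat_vec[OF B B v(1)] assoc_mult_mat_vec[OF C C v(1)] BBCC by simp
  have Bv: "B *\<^sub>v v \<in> carrier_vec n" and Cv: "C *\<^sub>v v \<in> carrier_vec n" using B C v by auto
  have "cinner v (B *\<^sub>v (?E *\<^sub>v v)) + cinner v (?E *\<^sub>v (C *\<^sub>v v))
    = cinner v (B *\<^sub>v (B *\<^sub>v v) - B *\<^sub>v (C *\<^sub>v v)) + cinner v (B *\<^sub>v (C *\<^sub>v v) - C *\<^sub>v (C *\<^sub>v v))"
    unfolding Ew[OF v(1)] Ew[OF Cv] mult_minus_distrib_mat_vec[OF B Bv Cv] ..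
  also have "\<dots> = 0" using B C Bv Cv BBv by (simp add: cinner_diff_right)
  finally have z: "cinner v (B *\<^sub>v (?E *\<^sub>v v)) + cinner v (?E *\<^sub>v (C *\<^sub>v v)) = 0" .
  have "cinner v (B *\<^sub>v (?E *\<^sub>v v)) = complex_of_real \<mu> * quad_form B v"
    unfolding Ev quad_form_def mult_mat_vec[OF B v(1)] by simp
  moreover have "cinner v (?E *\<^sub>v (C *\<^sub>v v)) = complex_of_real \<mu> * quad_form C v"
    using hermitian_cinner[OF E hE v(1) Cv] Ev v C by (simp add: quad_form_def)
  ultimately have "complex_of_real \<mu> * (quad_form B v + quad_form C v) = 0"
    using z by (simp add: distrib_left)
  moreover have "quad_form B v + quad_form C v \<noteq> 0"
    using pd_quad_form_pos[OF B pB v] pd_quad_form_pos[OF C pC v]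
    by (metis add_pos_pos less_irrefl plus_complex.sel(1) zero_complex.sel(1))
  ultimately show "\<mu> = 0" by simp
qed

lemma pd_sqrt_unique: assumes B: "B \<in> carrier_mat n n" and C: "C \<in> carrier_mat n n"
  and A: "A \<in> carrier_mat n n" and pB: "pd B" and pC: "pd C"
  and BA: "B * B * A = 1\<^sub>m n" and CA: "C * C * A = 1\<^sub>m n"
  shows "B = C"
proof -
  have BB: "B * B \<in> carrier_mat n n" and CC: "C * C \<in> carrier_mat n n" using B C by auto
  have ACC: "A * (C * C) = 1\<^sub>m n" using mat_mult_left_right_inverse[OF CC A CA] .
  have "B * B = (B * B) * (A * (C * C))" using ACC BB by (simp add: right_mult_one_mat)
  also have "\<dots> = ((B * B) * A) * (C * C)" using BB A CC by (simp add: assoc_mult_mat[of _ n n _ n _ n])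
  also have "\<dots> = C * C" using BA CC by (simp add: left_mult_one_mat)
  finally have BBCC: "B * B = C * C" .
  have "adj (B - C) = B - C" using adj_minus[OF B C] pd_hermitian[OF B pB] pd_hermitian[OF C pC] by simp
  then obtain U f where U: "unitary n U" "B - C = U * real_diag n f * adj U"
    using hermitian_unitary_diag[OF minus_carrier_mat[OF C]] by blast
  have "f i = 0" if i: "i < n" for i
    using pd_square_eq_diff_eigenvalue[OF B C pB pC BBCC _ unitary_col_nonzero[OF U(1) i]]
      unitary_diag_col[OF U(1) i] U(2) unitaryD(1)[OF U(1)] i by simp
  then have E0: "B - C = 0\<^sub>m n n" using unitary_diag_zero[OF U(1)] U(2) by simp
  show "B = C"
  proof (rule eq_matI)
    fix i j assume "i < dim_row C" "j < dim_col C"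
    then show "B $$ (i,j) = C $$ (i,j)" using arg_cong[OF E0, of "\<lambda>M. M $$ (i,j)"] B C by simp
  qed (use B C in auto)
qed

lemma inv_sqrt: assumes A: "A \<in> carrier_mat n n" and pA: "pd A"
  shows "inv_sqrt A \<in> carrier_mat n n" "pd (inv_sqrt A)" "inv_sqrt A * inv_sqrt A * A = 1\<^sub>m n"
proof -
  obtain U f where U: "unitary n U" "A = U * real_diag n f * adj U"
    using hermitian_unitary_diag[OF A pd_hermitian[OF A pA]] by blast
  have fpos: "0 < f i" if "i < n" for i using pd_unitary_diag_pos[OF U(1) _ that] pA U(2) by simp
  define B where "B = U * real_diag n (\<lambda>i. 1 / sqrt (f i)) * adj U"
  have B: "B \<in> carrier_mat n n \<and> pd B \<and> B * B * A = 1\<^sub>m n"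
  proof (intro conjI)
    show "B \<in> carrier_mat n n" using unitary_diag_carrier[OF U(1)] by (simp add: B_def)
    show "pd B" unfolding B_def by (rule pd_unitary_diag[OF U(1)]) (use fpos in simp)
    have "B * B * A = U * real_diag n (\<lambda>i. 1 / sqrt (f i) * (1 / sqrt (f i)) * f i) * adj U"
      unfolding B_def U(2) unitary_diag_mult[OF U(1)] ..
    also have "\<dots> = 1\<^sub>m n"
    proof (rule unitary_diag_one[OF U(1)])
      fix i assume "i < n"
      then have "0 < f i" by (rule fpos)
      then show "1 / sqrt (f i) * (1 / sqrt (f i)) * f i = 1" by (simp add: field_simps)
    qed
    finally show "B * B * A = 1\<^sub>m n" .
  qed
  have "inv_sqrt A = B" unfolding inv_sqrt_def carrier_matD(1)[OF A]
  proof (rule the_equality)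
    fix B' assume "B' \<in> carrier_mat n n \<and> pd B' \<and> B' * B' * A = 1\<^sub>m n"
    then show "B' = B" using pd_sqrt_unique[OF _ _ A] B by blast
  qed (rule B)
  then show "inv_sqrt A \<in> carrier_mat n n" "pd (inv_sqrt A)" "inv_sqrt A * inv_sqrt A * A = 1\<^sub>m n"
    using B by simp_all
qed

lemma inv_sqrt_inverse: assumes B: "B \<in> carrier_mat n n" and pB: "pd B"
  shows "inv_sqrt B * (inv_sqrt B * B) = 1\<^sub>m n" "(inv_sqrt B * B) * inv_sqrt B = 1\<^sub>m n"
proof -
  note S = inv_sqrt[OF B pB]
  show 1: "inv_sqrt B * (inv_sqrt B * B) = 1\<^sub>m n"
    using S B by (simp add: assoc_mult_mat[of _ n n _ n _ n])
  show "(inv_sqrt B * B) * inv_sqrt B = 1\<^sub>m n"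
    by (rule mat_mult_left_right_inverse[OF S(1) _ 1]) (use S(1) B in simp)
qed

lemma quad_form_inv_sqrt: assumes B: "B \<in> carrier_mat n n" and pB: "pd B" and w: "w \<in> carrier_vec n"
  shows "quad_form B (inv_sqrt B *\<^sub>v w) = cinner w w"
proof -
  note S = inv_sqrt[OF B pB]
  have "inv_sqrt B * B * inv_sqrt B = 1\<^sub>m n" using inv_sqrt_inverse(2)[OF B pB] .
  then have "quad_form (adj (inv_sqrt B) * B * inv_sqrt B) w = cinner w w"
    using pd_hermitian[OF S(1,2)] w by (simp add: quad_form_def)
  then show ?thesis using quad_form_congruence[OF S(1) B w] by simp
qed

lemma ctrace_mult_comm: assumes A: "A \<in> carrier_mat n m" and B: "B \<in> carrier_mat m n"
  shows "ctrace (A * B) = ctrace (B * A)"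
proof -
  have "ctrace (A * B) = (\<Sum>i<n. \<Sum>k<m. A $$ (i,k) * B $$ (k,i))"
    using A B by (auto simp: ctrace_def scalar_prod_def lessThan_atLeast0 intro!: sum.cong)
  also have "\<dots> = (\<Sum>k<m. \<Sum>i<n. B $$ (k,i) * A $$ (i,k))"
    by (subst sum.swap) (simp add: mult.commute)
  also have "\<dots> = ctrace (B * A)"
    using A B by (auto simp: ctrace_def scalar_prod_def lessThan_atLeast0 intro!: sum.cong)
  finally show ?thesis .
qed

lemma ctrace_diff: "A \<in> carrier_mat n n \<Longrightarrow> B \<in> carrier_mat n n \<Longrightarrow> ctrace (A - B) = ctrace A - ctrace B"
  by (auto simp: ctrace_def sum_subtractf)

lemma ctrace_smult: "A \<in> carrier_mat n n \<Longrightarrow> ctrace (c \<cdot>\<^sub>m A) = c * ctrace A"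
  by (auto simp: ctrace_def sum_distrib_left)

lemma ctrace_mult_one_minus: assumes X: "X \<in> carrier_mat n n" and Q: "Q \<in> carrier_mat n n"
  shows "ctrace (X * (1\<^sub>m n - Q)) = ctrace X - ctrace (X * Q)"
  using mult_minus_distrib_mat[OF X one_carrier_mat Q] ctrace_diff[of X n "X * Q"] X Q by simp

lemma ctrace_mult_unitary_diag: assumes X: "X \<in> carrier_mat n n" and U: "unitary n U"
  shows "ctrace (X * (U * real_diag n g * adj U)) = (\<Sum>i<n. quad_form X (col U i) * complex_of_real (g i))"
proof -
  have Uc: "U \<in> carrier_mat n n" using unitaryD(1)[OF U] .
  have "X * (U * real_diag n g * adj U) = (X * (U * real_diag n g)) * adj U"
    using X Uc by (simp add: assoc_mult_mat[of _ n n _ n _ n])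
  then have "ctrace (X * (U * real_diag n g * adj U)) = ctrace (adj U * (X * (U * real_diag n g)))"
    using ctrace_mult_comm[of "X * (U * real_diag n g)" n n "adj U"] X Uc by simp
  also have "adj U * (X * (U * real_diag n g)) = (adj U * (X * U)) * real_diag n g"
    using X Uc by (simp add: assoc_mult_mat[of _ n n _ n _ n])
  also have "ctrace \<dots> = (\<Sum>i<n. (adj U * (X * U)) $$ (i,i) * complex_of_real (g i))"
    using X Uc by (simp add: ctrace_def scalar_prod_def if_distrib[of "\<lambda>x. _ * x"] cong: if_cong)
  also have "\<dots> = (\<Sum>i<n. quad_form X (col U i) * complex_of_real (g i))"
    using adj_mult_index[of U n n "X * U" n] col_mult2[OF X Uc] X Uc by (simp add: quad_form_def)
  finally show ?thesis .
qed

lemma ctrace_mult_psd_nonneg: assumes X: "X \<in> carrier_mat n n" and Q: "Q \<in> carrier_mat n n"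
  and pX: "psd X" and pQ: "psd Q"
  shows "0 \<le> Re (ctrace (X * Q))"
proof -
  obtain U f where U: "unitary n U" "Q = U * real_diag n f * adj U"
    using hermitian_unitary_diag[OF Q] pQ psd_iff_quad_form[OF Q] by blast
  have "0 \<le> Re (quad_form X (col U i)) * f i" if "i < n" for i
    using psd_unitary_diag_nonneg[OF U(1) _ that] pQ U(2) pX psd_iff_quad_form[OF X] unitaryD(1)[OF U(1)] that
    by simp
  then show ?thesis unfolding U(2) ctrace_mult_unitary_diag[OF X U(1)] by (auto intro!: sum_nonneg)
qed

definition outer :: "complex vec \<Rightarrow> complex mat" where
  "outer v = mat (dim_vec v) (dim_vec v) (\<lambda>(i,j). v $ i * cnj (v $ j))"

lemma outer_carrier[simp]: "v \<in> carrier_vec n \<Longrightarrow> outer v \<in> carrier_mat n n"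
  by (auto simp: outer_def)

lemma adj_outer: "adj (outer v) = outer v"
  by (rule eq_matI) (auto simp: outer_def adj_def mult.commute)

lemma outer_mult_vec: assumes "v \<in> carrier_vec n" "w \<in> carrier_vec n"
  shows "outer v *\<^sub>v w = cinner v w \<cdot>\<^sub>v v"
  by (rule eq_vecI) (use assms in \<open>auto simp: outer_def cinner_def scalar_prod_def sum_distrib_left
    lessThan_atLeast0 ac_simps intro!: sum.cong\<close>)

lemma quad_form_outer: assumes "v \<in> carrier_vec n" "w \<in> carrier_vec n"
  shows "quad_form (outer v) w = complex_of_real ((cmod (cinner v w))\<^sup>2)"
proof -
  have "quad_form (outer v) w = cinner v w * cinner w v" unfolding quad_form_def outer_mult_vec[OF assms] by simp
  also have "cinner w v = cnj (cinner v w)" by (rule cinner_commute) (use assms in auto)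
  finally show ?thesis using complex_norm_square[of "cinner v w"] by simp
qed

lemma ctrace_mult_outer: assumes X: "X \<in> carrier_mat n n" and v: "v \<in> carrier_vec n"
  shows "ctrace (X * outer v) = quad_form X v"
proof -
  have "ctrace (X * outer v) = (\<Sum>i<n. \<Sum>k\<in>{0..<n}. X $$ (i,k) * (v $ k * cnj (v $ i)))"
    using X v by (auto simp: ctrace_def outer_def scalar_prod_def intro!: sum.cong)
  also have "\<dots> = quad_form X v"
    using X v by (auto simp: quad_form_def cinner_def scalar_prod_def sum_distrib_left ac_simps intro!: sum.cong)
  finally show ?thesis .
qed

text \<open>Cauchy-Schwarz, read off from the first coordinate in an orthonormal basis starting with v.\<close>

lemma cinner_unit_bound: assumes v: "v \<in> carrier_vec n" and v1: "cinner v v = 1" and w: "w \<in> carrier_vec n"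
  shows "(cmod (cinner v w))\<^sup>2 \<le> Re (cinner w w)"
proof -
  have v0: "v \<noteq> 0\<^sub>v n" using v1 v by auto
  have n: "0 < n" using v v0 by (cases n) auto
  obtain ws where ws: "length ws = n" "orthonormal n ws" "ws!0 = normalized v"
    using orthonormal_completion[OF v v0] by blast
  have ws0: "ws!0 = v" using ws(3) v1 by (simp add: normalized_def)
  define W where "W = mat_of_cols n ws"
  have un: "unitary n W" using unitary_mat_of_cols[OF ws(2,1)] by (simp add: W_def)
  have c0: "(adj W *\<^sub>v w) $ 0 = cinner v w"
    using adj_mult_vec_index[OF unitaryD(1)[OF un] w n] orthonormal_col[OF ws(2)] ws(1) n ws0 by (simp add: W_def)
  have "(cmod (cinner v w))\<^sup>2 \<le> (\<Sum>i<n. (cmod ((adj W *\<^sub>v w) $ i))\<^sup>2)"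
    using member_le_sum[of 0 "{..<n}" "\<lambda>i. (cmod ((adj W *\<^sub>v w) $ i))\<^sup>2"] n c0 by simp
  also have "\<dots> = Re (cinner w w)" using cinner_self_unitary_coords[OF un w] by simp
  finally show ?thesis .
qed

lemma rank_one_test: assumes v: "v \<in> carrier_vec n" and v1: "cinner v v = 1" and t: "0 \<le> t" "t \<le> 1"
  shows "psd (complex_of_real t \<cdot>\<^sub>m outer v)" "psd (1\<^sub>m n - complex_of_real t \<cdot>\<^sub>m outer v)"
proof -
  let ?Q = "complex_of_real t \<cdot>\<^sub>m outer v"
  have O: "outer v \<in> carrier_mat n n" using v by simp
  have Q: "?Q \<in> carrier_mat n n" using O by simp
  have hQ: "adj ?Q = ?Q" by (simp add: adj_smult adj_outer)
  have qQ: "quad_form ?Q w = complex_of_real (t * (cmod (cinner v w))\<^sup>2)" if w: "w \<in> carrier_vec n" for w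
    using quad_form_smult_mat[OF O w] quad_form_outer[OF v w] by simp
  show "psd ?Q" unfolding psd_iff_quad_form[OF Q] using hQ qQ t by auto
  have R: "1\<^sub>m n - ?Q \<in> carrier_mat n n" by (rule minus_carrier_mat[OF Q])
  have hR: "adj (1\<^sub>m n - ?Q) = 1\<^sub>m n - ?Q" using adj_minus[of "1\<^sub>m n" n n ?Q] Q hQ by simp
  have "0 \<le> Re (quad_form (1\<^sub>m n - ?Q) w)" if w: "w \<in> carrier_vec n" for w
  proof -
    have "quad_form (1\<^sub>m n - ?Q) w = cinner w w - quad_form ?Q w"
      using minus_mult_distrib_mat_vec[OF one_carrier_mat Q w] cinner_diff_right[of w "?Q *\<^sub>v w"] w Q
        carrier_matD(1)[OF O]
      by (simp add: quad_form_def)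
    then have "Re (quad_form (1\<^sub>m n - ?Q) w) = Re (cinner w w) - t * (cmod (cinner v w))\<^sup>2"
      using qQ[OF w] by simp
    moreover have "t * (cmod (cinner v w))\<^sup>2 \<le> (cmod (cinner v w))\<^sup>2" using t by (simp add: mult_left_le_one_le)
    ultimately show ?thesis using cinner_unit_bound[OF v v1 w] by simp
  qed
  then show "psd (1\<^sub>m n - ?Q)" unfolding psd_iff_quad_form[OF R] using hR by auto
qed

lemma ctrace_mult_rank_one: assumes X: "X \<in> carrier_mat n n" and v: "v \<in> carrier_vec n"
  shows "ctrace (X * (c \<cdot>\<^sub>m outer v)) = c * quad_form X v"
  using mult_smult_distrib[OF X outer_carrier[OF v]] ctrace_smult[of "X * outer v" n c] ctrace_mult_outer[OF X v] X v
  by simp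

section \<open>The largest sandwiched eigenvalue\<close>

definition lambda_max_sandwich :: "complex mat \<Rightarrow> complex mat \<Rightarrow> real" where
  "lambda_max_sandwich A B = lambda_max (inv_sqrt B * A * inv_sqrt B)"

lemma inv_sqrt_mult_vec_inverse: assumes B: "B \<in> carrier_mat n n" and pB: "pd B" and v: "v \<in> carrier_vec n"
  shows "inv_sqrt B *\<^sub>v ((inv_sqrt B * B) *\<^sub>v v) = v" "(inv_sqrt B * B) *\<^sub>v (inv_sqrt B *\<^sub>v v) = v"
proof -
  have S: "inv_sqrt B \<in> carrier_mat n n" using inv_sqrt(1)[OF B pB] .
  have SB: "inv_sqrt B * B \<in> carrier_mat n n" using S B by simp
  have "inv_sqrt B *\<^sub>v ((inv_sqrt B * B) *\<^sub>v v) = (inv_sqrt B * (inv_sqrt B * B)) *\<^sub>v v"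
    by (rule assoc_mult_mat_vec[OF S SB v, symmetric])
  then show "inv_sqrt B *\<^sub>v ((inv_sqrt B * B) *\<^sub>v v) = v" using inv_sqrt_inverse(1)[OF B pB] v by simp
  have "(inv_sqrt B * B) *\<^sub>v (inv_sqrt B *\<^sub>v v) = ((inv_sqrt B * B) * inv_sqrt B) *\<^sub>v v"
    by (rule assoc_mult_mat_vec[OF SB S v, symmetric])
  then show "(inv_sqrt B * B) *\<^sub>v (inv_sqrt B *\<^sub>v v) = v" using inv_sqrt_inverse(2)[OF B pB] v by simp
qed

lemma inv_sqrt_mult_vec_nonzero:
  assumes B: "B \<in> carrier_mat n n" and pB: "pd B" and w: "w \<in> carrier_vec n" "w \<noteq> 0\<^sub>v n"
  shows "inv_sqrt B *\<^sub>v w \<noteq> 0\<^sub>v n"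
proof
  assume "inv_sqrt B *\<^sub>v w = 0\<^sub>v n"
  then have "(inv_sqrt B * B) *\<^sub>v (inv_sqrt B *\<^sub>v w) = 0\<^sub>v n"
    using inv_sqrt(1)[OF B pB] B by (simp add: mult_carrier_mat[of _ n n _ n])
  then show False using inv_sqrt_mult_vec_inverse(2)[OF B pB w(1)] w(2) by simp
qed

lemma pd_sandwich: assumes A: "A \<in> carrier_mat n n" and B: "B \<in> carrier_mat n n" and pA: "pd A" and pB: "pd B"
  shows "pd (inv_sqrt B * A * inv_sqrt B)"
proof -
  note S = inv_sqrt[OF B pB]
  have hS: "adj (inv_sqrt B) = inv_sqrt B" using pd_hermitian[OF S(1,2)] .
  have "0 < Re (quad_form (adj (inv_sqrt B) * A * inv_sqrt B) w)"
    if "w \<in> carrier_vec n" "w \<noteq> 0\<^sub>v n" for w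
  proof -
    have "inv_sqrt B *\<^sub>v w \<noteq> 0\<^sub>v n" using inv_sqrt_mult_vec_nonzero[OF B pB that] .
    then show ?thesis
      using quad_form_congruence[OF S(1) A that(1)] pd_quad_form_pos[OF A pA] S(1) that(1) by simp
  qed
  then show ?thesis
    using pd_iff_quad_form[of "adj (inv_sqrt B) * A * inv_sqrt B" n] hermitian_congruence[OF A pd_hermitian[OF A pA] S(1)]
      S(1) A hS by auto
qed

lemma lambda_max_sandwich_pos:
  assumes "A \<in> carrier_mat n n" "B \<in> carrier_mat n n" "pd A" "pd B" "0 < n"
  shows "0 < lambda_max_sandwich A B"
  unfolding lambda_max_sandwich_def
  using pd_lambda_max_pos[OF _ pd_sandwich[OF assms(1-4)] assms(5)] inv_sqrt(1)[OF assms(2,4)] assms(1) by simp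

lemma quad_form_le_lambda_max_sandwich:
  assumes A: "A \<in> carrier_mat n n" and B: "B \<in> carrier_mat n n" and pA: "pd A" and pB: "pd B"
    and n: "0 < n" and v: "v \<in> carrier_vec n"
  shows "Re (quad_form A v) \<le> lambda_max_sandwich A B * Re (quad_form B v)"
proof -
  note S = inv_sqrt[OF B pB]
  let ?M = "inv_sqrt B * A * inv_sqrt B"
  have M: "?M \<in> carrier_mat n n" using S(1) A by simp
  define w where "w = (inv_sqrt B * B) *\<^sub>v v"
  have w: "w \<in> carrier_vec n" using S(1) B v by (simp add: w_def)
  have Sw: "inv_sqrt B *\<^sub>v w = v" using inv_sqrt_mult_vec_inverse(1)[OF B pB v] by (simp add: w_def)
  have "Re (quad_form A v) = Re (quad_form ?M w)"
    using quad_form_congruence[OF S(1) A w] pd_hermitian[OF S(1,2)] Sw by simp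
  also have "\<dots> \<le> lambda_max ?M * Re (cinner w w)"
    using lambda_max_min_rayleigh(2)[OF M pd_hermitian[OF M pd_sandwich[OF A B pA pB]] n w] .
  also have "cinner w w = quad_form B v" using quad_form_inv_sqrt[OF B pB w] Sw by simp
  finally show ?thesis by (simp add: lambda_max_sandwich_def)
qed

lemma ctrace_le_lambda_max_sandwich:
  assumes A: "A \<in> carrier_mat n n" and B: "B \<in> carrier_mat n n" and pA: "pd A" and pB: "pd B"
    and n: "0 < n" and Q: "Q \<in> carrier_mat n n" "psd Q"
  shows "Re (ctrace (A * Q)) \<le> lambda_max_sandwich A B * Re (ctrace (B * Q))"
proof -
  define X where "X = complex_of_real (lambda_max_sandwich A B) \<cdot>\<^sub>m B - A"
  have X: "X \<in> carrier_mat n n" unfolding X_def by (rule minus_carrier_mat[OF A])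
  have "adj X = X" unfolding X_def
    using adj_minus[of _ n n A] A B pd_hermitian[OF A pA] pd_hermitian[OF B pB] by (simp add: adj_smult)
  moreover have "0 \<le> Re (quad_form X v)" if v: "v \<in> carrier_vec n" for v
  proof -
    have "X *\<^sub>v v = complex_of_real (lambda_max_sandwich A B) \<cdot>\<^sub>v (B *\<^sub>v v) - A *\<^sub>v v"
      unfolding X_def using minus_mult_distrib_mat_vec[of _ n n A v] A B v by (simp add: smult_mat_mult_vec)
    then have "quad_form X v = complex_of_real (lambda_max_sandwich A B) * quad_form B v - quad_form A v"
      unfolding quad_form_def using A B v by (simp add: cinner_diff_right)
    then show ?thesis using quad_form_le_lambda_max_sandwich[OF A B pA pB n v] by simp
  qed
  ultimately have "0 \<le> Re (ctrace (X * Q))"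
    using ctrace_mult_psd_nonneg[OF X Q(1) _ Q(2)] psd_iff_quad_form[OF X] by blast
  also have "X * Q = complex_of_real (lambda_max_sandwich A B) \<cdot>\<^sub>m (B * Q) - A * Q"
    unfolding X_def using minus_mult_distrib_mat[of _ n n A Q n] A B Q by (simp add: mult_smult_assoc_mat[OF B Q(1)])
  finally show ?thesis using ctrace_diff[of _ n "A * Q"] ctrace_smult[of "B * Q" n] A B Q by simp
qed

lemma lambda_max_sandwich_attained:
  assumes A: "A \<in> carrier_mat n n" and B: "B \<in> carrier_mat n n" and pA: "pd A" and pB: "pd B" and n: "0 < n"
  obtains v where "v \<in> carrier_vec n" "cinner v v = 1"
    "Re (quad_form A v) = lambda_max_sandwich A B * Re (quad_form B v)"
proof -
  note S = inv_sqrt[OF B pB]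
  let ?M = "inv_sqrt B * A * inv_sqrt B"
  let ?lam = "lambda_max_sandwich A B"
  have M: "?M \<in> carrier_mat n n" using S(1) A by simp
  have "?lam \<in> rspec ?M" unfolding lambda_max_sandwich_def
    by (rule lambda_max_min_rayleigh(1)[OF M pd_hermitian[OF M pd_sandwich[OF A B pA pB]] n])
  then obtain u where u: "u \<in> carrier_vec n" "u \<noteq> 0\<^sub>v n" "?M *\<^sub>v u = complex_of_real ?lam \<cdot>\<^sub>v u"
    unfolding rspec_def eigenvalue_def eigenvector_def using M by auto
  define v0 where "v0 = inv_sqrt B *\<^sub>v u"
  have v0: "v0 \<in> carrier_vec n" "v0 \<noteq> 0\<^sub>v n"
    using inv_sqrt_mult_vec_nonzero[OF B pB u(1,2)] u(1) S(1) by (simp_all add: v0_def)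
  have "quad_form A v0 = quad_form ?M u"
    using quad_form_congruence[OF S(1) A u(1)] pd_hermitian[OF S(1,2)] by (simp add: v0_def)
  also have "\<dots> = complex_of_real ?lam * quad_form B v0"
    using u(3) quad_form_inv_sqrt[OF B pB u(1)] by (simp add: quad_form_def v0_def)
  finally have "quad_form A (normalized v0) = complex_of_real ?lam * quad_form B (normalized v0)"
    using quad_form_smult_vec[OF A v0(1)] quad_form_smult_vec[OF B v0(1)] by (simp add: normalized_def)
  then show ?thesis
    using that[of "normalized v0"] cinner_normalized[OF v0] v0(1) by (simp add: normalized_def)
qed

section \<open>Optimal tests below the smallest eigenvalue\<close>

text \<open>Scaling the projection onto a unit vector v by t = x / <v, \<rho> v> gives a test detecting \<rho> with
  probability exactly x; t \<le> 1 because x \<le> lambda_min \<rho> \<le> <v, \<rho> v>.\<close>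

lemma scaled_rank_one_test:
  assumes r: "\<rho> \<in> carrier_mat n n" and pr: "pd \<rho>" and n: "0 < n"
    and x: "0 \<le> x" "x \<le> lambda_min \<rho>" and v: "v \<in> carrier_vec n" "cinner v v = 1"
  obtains Q where "Q \<in> carrier_mat n n" "psd Q" "psd (1\<^sub>m n - Q)" "Re (ctrace (\<rho> * Q)) = x"
    "\<And>X. X \<in> carrier_mat n n \<Longrightarrow> Re (ctrace (X * Q)) = x * Re (quad_form X v) / Re (quad_form \<rho> v)"
proof -
  define c where "c = Re (quad_form \<rho> v)"
  have "v \<noteq> 0\<^sub>v n" using v by auto
  then have c: "0 < c" using pd_quad_form_pos[OF r pr v(1)] by (simp add: c_def)
  have "x \<le> c" using lambda_max_min_rayleigh(3)[OF r pd_hermitian[OF r pr] n v(1)] x v(2) by (simp add: c_def)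
  then have t: "0 \<le> x / c" "x / c \<le> 1" using x c by auto
  define Q where "Q = complex_of_real (x / c) \<cdot>\<^sub>m outer v"
  show ?thesis
  proof (rule that)
    show "Q \<in> carrier_mat n n" using v by (simp add: Q_def)
    show "psd Q" "psd (1\<^sub>m n - Q)" using rank_one_test[OF v t] by (simp_all add: Q_def)
    show "Re (ctrace (X * Q)) = x * Re (quad_form X v) / Re (quad_form \<rho> v)" if "X \<in> carrier_mat n n" for X
      unfolding Q_def ctrace_mult_rank_one[OF that v(1)] by (simp add: c_def)
    then show "Re (ctrace (\<rho> * Q)) = x" using r c by (simp add: c_def)
  qed
qed

lemma beta_one_minus_eq:
  assumes r: "\<rho> \<in> carrier_mat n n" and s: "\<sigma> \<in> carrier_mat n n" and pr: "pd \<rho>" and ps: "pd \<sigma>"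
    and n: "0 < n" and x: "0 \<le> x" "x \<le> lambda_min \<rho>"
  shows "beta (1 - x) \<rho> \<sigma> = x / lambda_max_sandwich \<rho> \<sigma>"
  unfolding beta_def carrier_matD(1)[OF r]
proof (rule cInf_eq_minimum)
  let ?lam = "lambda_max_sandwich \<rho> \<sigma>"
  have lam: "0 < ?lam" by (rule lambda_max_sandwich_pos[OF r s pr ps n])
  obtain v where v: "v \<in> carrier_vec n" "cinner v v = 1" "Re (quad_form \<rho> v) = ?lam * Re (quad_form \<sigma> v)"
    using lambda_max_sandwich_attained[OF r s pr ps n] by blast
  obtain Q where Q: "Q \<in> carrier_mat n n" "psd Q" "psd (1\<^sub>m n - Q)" "Re (ctrace (\<rho> * Q)) = x"
    "Re (ctrace (\<sigma> * Q)) = x * Re (quad_form \<sigma> v) / Re (quad_form \<rho> v)"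
    using scaled_rank_one_test[OF r pr n x v(1,2)] s by metis
  have "v \<noteq> 0\<^sub>v n" using v(2) by auto
  then have "0 < Re (quad_form \<sigma> v)" using pd_quad_form_pos[OF s ps v(1)] by blast
  then have "Re (ctrace (\<sigma> * Q)) = x / ?lam" using Q(5) v(3) lam by (simp add: field_simps)
  then show "x / ?lam \<in> {Re (ctrace (\<sigma> * Q)) |Q. Q \<in> carrier_mat n n \<and> psd Q \<and> psd (1\<^sub>m n - Q) \<and>
      1 - (1 - x) \<le> Re (ctrace (\<rho> * Q))}" using Q by force
next
  fix y assume "y \<in> {Re (ctrace (\<sigma> * Q)) |Q. Q \<in> carrier_mat n n \<and> psd Q \<and> psd (1\<^sub>m n - Q) \<and>
      1 - (1 - x) \<le> Re (ctrace (\<rho> * Q))}"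
  then obtain Q where Q: "Q \<in> carrier_mat n n" "psd Q" "x \<le> Re (ctrace (\<rho> * Q))" "y = Re (ctrace (\<sigma> * Q))"
    by auto
  have "x \<le> lambda_max_sandwich \<rho> \<sigma> * y"
    using ctrace_le_lambda_max_sandwich[OF r s pr ps n Q(1,2)] Q(3,4) by simp
  then show "x / lambda_max_sandwich \<rho> \<sigma> \<le> y"
    using lambda_max_sandwich_pos[OF r s pr ps n] by (simp add: field_simps)
qed

text \<open>Passing to complementary tests 1 - Q turns the constraint Tr(\<rho> Q) \<ge> 1 - x into
  Tr(\<rho> (1 - Q)) \<le> x, and the optimum of the resulting problem is again a scaled rank-one test,
  now along a maximizing vector for the pair (\<sigma>, \<rho>).\<close>

lemma one_minus_beta_eq:
  assumes r: "\<rho> \<in> carrier_mat n n" and s: "\<sigma> \<in> carrier_mat n n" and pr: "pd \<rho>" and ps: "pd \<sigma>"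
    and tr: "ctrace \<rho> = 1" and ts: "ctrace \<sigma> = 1" and n: "0 < n" and x: "0 \<le> x" "x \<le> lambda_min \<rho>"
  shows "1 - beta x \<rho> \<sigma> = x * lambda_max_sandwich \<sigma> \<rho>"
proof -
  let ?mu = "lambda_max_sandwich \<sigma> \<rho>"
  have "beta x \<rho> \<sigma> = 1 - x * ?mu"
    unfolding beta_def carrier_matD(1)[OF r]
  proof (rule cInf_eq_minimum)
    obtain v where v: "v \<in> carrier_vec n" "cinner v v = 1" "Re (quad_form \<sigma> v) = ?mu * Re (quad_form \<rho> v)"
      using lambda_max_sandwich_attained[OF s r ps pr n] by blast
    obtain Q' where Q': "Q' \<in> carrier_mat n n" "psd Q'" "psd (1\<^sub>m n - Q')" "Re (ctrace (\<rho> * Q')) = x"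
      "Re (ctrace (\<sigma> * Q')) = x * Re (quad_form \<sigma> v) / Re (quad_form \<rho> v)"
      using scaled_rank_one_test[OF r pr n x v(1,2)] s by metis
    have "v \<noteq> 0\<^sub>v n" using v(2) by auto
    then have "0 < Re (quad_form \<rho> v)" using pd_quad_form_pos[OF r pr v(1)] by blast
    then have s': "Re (ctrace (\<sigma> * Q')) = x * ?mu" using Q'(5) v(3) by simp
    have "1\<^sub>m n - (1\<^sub>m n - Q') = Q'" using Q'(1) by auto
    then show "1 - x * ?mu \<in> {Re (ctrace (\<sigma> * Q)) |Q. Q \<in> carrier_mat n n \<and> psd Q \<and> psd (1\<^sub>m n - Q) \<and>
        1 - x \<le> Re (ctrace (\<rho> * Q))}"
      using ctrace_mult_one_minus[OF r Q'(1)] ctrace_mult_one_minus[OF s Q'(1)] tr ts Q' s'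
      by (intro CollectI exI[of _ "1\<^sub>m n - Q'"]) auto
  next
    fix y assume "y \<in> {Re (ctrace (\<sigma> * Q)) |Q. Q \<in> carrier_mat n n \<and> psd Q \<and> psd (1\<^sub>m n - Q) \<and>
        1 - x \<le> Re (ctrace (\<rho> * Q))}"
    then obtain Q where Q: "Q \<in> carrier_mat n n" "psd (1\<^sub>m n - Q)" "1 - x \<le> Re (ctrace (\<rho> * Q))"
      "y = Re (ctrace (\<sigma> * Q))" by auto
    have "Re (ctrace (\<sigma> * (1\<^sub>m n - Q))) \<le> ?mu * Re (ctrace (\<rho> * (1\<^sub>m n - Q)))"
      by (rule ctrace_le_lambda_max_sandwich[OF s r ps pr n minus_carrier_mat[OF Q(1)] Q(2)])
    then have "1 - y \<le> ?mu * (1 - Re (ctrace (\<rho> * Q)))"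
      using ctrace_mult_one_minus[OF r Q(1)] ctrace_mult_one_minus[OF s Q(1)] tr ts Q(4) by simp
    also have "\<dots> \<le> ?mu * x"
      using Q(3) lambda_max_sandwich_pos[OF s r ps pr n] by (intro mult_left_mono) auto
    finally show "1 - x * ?mu \<le> y" by (simp add: mult.commute)
  qed
  then show ?thesis by simp
qed

lemma beta_formulas:
  assumes r: "\<rho> \<in> carrier_mat n n" and s: "\<sigma> \<in> carrier_mat n n" and pr: "pd \<rho>" and ps: "pd \<sigma>"
    and tr: "ctrace \<rho> = 1" and ts: "ctrace \<sigma> = 1" and x: "0 \<le> x" "x \<le> lambda_min \<rho>"
  shows "beta (1 - x) \<rho> \<sigma> = x * exp (- D_pinf \<rho> \<sigma>)" "1 - beta x \<rho> \<sigma> = x * exp (- D_minf \<rho> \<sigma>)"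
proof -
  have n: "0 < n" using tr r by (cases n) (auto simp: ctrace_def)
  have "exp (- D_pinf \<rho> \<sigma>) = 1 / lambda_max_sandwich \<rho> \<sigma>"
    using lambda_max_sandwich_pos[OF r s pr ps n]
    by (simp add: D_pinf_def lambda_max_sandwich_def exp_minus inverse_eq_divide)
  then show "beta (1 - x) \<rho> \<sigma> = x * exp (- D_pinf \<rho> \<sigma>)" using beta_one_minus_eq[OF r s pr ps n x] by simp
  have "exp (- D_minf \<rho> \<sigma>) = lambda_max_sandwich \<sigma> \<rho>"
    using lambda_max_sandwich_pos[OF s r ps pr n] by (simp add: D_minf_def lambda_max_sandwich_def)
  then show "1 - beta x \<rho> \<sigma> = x * exp (- D_minf \<rho> \<sigma>)" using one_minus_beta_eq[OF r s pr ps tr ts n x] by simp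
qed

section \<open>Pinching\<close>

lemma eq_mat_by_mult_vecI: assumes M: "(M::complex mat) \<in> carrier_mat n m" and N: "N \<in> carrier_mat n m"
  and eq: "\<And>x. x \<in> carrier_vec m \<Longrightarrow> M *\<^sub>v x = N *\<^sub>v x"
  shows "M = N"
proof (rule eq_matI)
  fix i j assume i: "i < dim_row N" and j: "j < dim_col N"
  have "M $$ (i,j) = (M *\<^sub>v unit_vec m j) $ i" using M N i j by simp
  also have "\<dots> = (N *\<^sub>v unit_vec m j) $ i" using eq[of "unit_vec m j"] by simp
  also have "\<dots> = N $$ (i,j)" using N i j by simp
  finally show "M $$ (i,j) = N $$ (i,j)" .
qed (use M N in auto)

text \<open>An orthogonal projection is determined by its fixed vectors: P' P = P and P P' = P',
  hence P = adj (P' P) = P P' = P'.\<close>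

lemma orth_proj_unique: assumes P: "P \<in> carrier_mat n n" and P': "P' \<in> carrier_mat n n"
  and hP: "adj P = P" and hP': "adj P' = P'" and iP: "P * P = P" and iP': "P' * P' = P'"
  and fix_eq: "\<And>v. v \<in> carrier_vec n \<Longrightarrow> P *\<^sub>v v = v \<longleftrightarrow> P' *\<^sub>v v = v"
  shows "P = P'"
proof -
  have absorb: "B * A = A" if A: "(A::complex mat) \<in> carrier_mat n n" "A * A = A" and B: "B \<in> carrier_mat n n"
    and f: "\<And>v. v \<in> carrier_vec n \<Longrightarrow> A *\<^sub>v v = v \<Longrightarrow> B *\<^sub>v v = v" for A B
  proof (rule eq_mat_by_mult_vecI[of "B * A" n n A])
    show "B * A \<in> carrier_mat n n" "A \<in> carrier_mat n n" using A B by auto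
    fix x :: "complex vec" assume x: "x \<in> carrier_vec n"
    have Ax: "A *\<^sub>v x \<in> carrier_vec n" using A x by simp
    have "A *\<^sub>v (A *\<^sub>v x) = A *\<^sub>v x" using assoc_mult_mat_vec[OF A(1) A(1) x] A(2) by simp
    then have "B *\<^sub>v (A *\<^sub>v x) = A *\<^sub>v x" using f[OF Ax] by simp
    then show "(B * A) *\<^sub>v x = A *\<^sub>v x" using assoc_mult_mat_vec[OF B A(1) x] by simp
  qed
  have 1: "P' * P = P" by (rule absorb[OF P iP P']) (use fix_eq in blast)
  have 2: "P * P' = P'" by (rule absorb[OF P' iP' P]) (use fix_eq in blast)
  have "P = adj (P' * P)" using 1 hP by simp
  also have "\<dots> = adj P * adj P'" by (rule adj_mult[OF P' P])
  also have "\<dots> = P'" using hP hP' 2 by simp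
  finally show ?thesis .
qed

lemma unitary_diag_eigen_iff: assumes U: "unitary n U" and v: "v \<in> carrier_vec n"
  shows "(U * real_diag n g * adj U) *\<^sub>v v = complex_of_real a \<cdot>\<^sub>v v \<longleftrightarrow>
    (\<forall>i<n. complex_of_real (g i) * (adj U *\<^sub>v v) $ i = complex_of_real a * (adj U *\<^sub>v v) $ i)"
proof -
  have Uc: "U \<in> carrier_mat n n" using unitaryD(1)[OF U] .
  define c where "c = adj U *\<^sub>v v"
  have c: "c \<in> carrier_vec n" using Uc v by (simp add: c_def)
  have l: "(U * real_diag n g * adj U) *\<^sub>v v = U *\<^sub>v (real_diag n g *\<^sub>v c)"
    using unitary_diag_mult_vec[OF U v] by (simp add: c_def)
  have r: "complex_of_real a \<cdot>\<^sub>v v = U *\<^sub>v (complex_of_real a \<cdot>\<^sub>v c)"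
    using mult_mat_vec[OF Uc c] unitary_adj_mult_vec(1)[OF U v] by (simp add: c_def)
  have "U *\<^sub>v (real_diag n g *\<^sub>v c) = U *\<^sub>v (complex_of_real a \<cdot>\<^sub>v c) \<longleftrightarrow>
      real_diag n g *\<^sub>v c = complex_of_real a \<cdot>\<^sub>v c"
    using unitary_adj_mult_vec(2)[OF U] c by (metis real_diag_mult_vec_carrier smult_carrier_vec)
  also have "\<dots> \<longleftrightarrow> (\<forall>i<n. complex_of_real (g i) * c $ i = complex_of_real a * c $ i)"
    using c by (auto simp: real_diag_mult_vec vec_eq_iff)
  finally show ?thesis unfolding l r c_def .
qed

definition spectral_proj :: "nat \<Rightarrow> complex mat \<Rightarrow> (nat \<Rightarrow> real) \<Rightarrow> real \<Rightarrow> complex mat" where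
  "spectral_proj n U f l = U * real_diag n (\<lambda>i. if f i = l then 1 else 0) * adj U"

lemma spectral_proj:
  assumes "unitary n U"
  shows "spectral_proj n U f l \<in> carrier_mat n n" "adj (spectral_proj n U f l) = spectral_proj n U f l"
    "spectral_proj n U f l * spectral_proj n U f l = spectral_proj n U f l"
  unfolding spectral_proj_def using unitary_diag_carrier[OF assms] adj_unitary_diag[OF assms]
  by (auto simp: unitary_diag_mult[OF assms] intro!: arg_cong[where f = "\<lambda>D. U * D * adj U"] real_diag_cong)

lemma eig_proj_unitary_diag: assumes U: "unitary n U"
  shows "eig_proj (U * real_diag n f * adj U) l = spectral_proj n U f l"
  unfolding eig_proj_def carrier_matD(1)[OF unitary_diag_carrier[OF U]]
proof (rule the_equality)
  let ?P = "spectral_proj n U f l"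
  have fixP: "?P *\<^sub>v v = v \<longleftrightarrow> (U * real_diag n f * adj U) *\<^sub>v v = complex_of_real l \<cdot>\<^sub>v v"
    if v: "v \<in> carrier_vec n" for v
    using unitary_diag_eigen_iff[OF U v, of _ 1] unitary_diag_eigen_iff[OF U v, of f l] v
    by (auto simp: spectral_proj_def)
  show "?P \<in> carrier_mat n n \<and> hermitian ?P \<and> ?P * ?P = ?P \<and>
      (\<forall>v\<in>carrier_vec n. (?P *\<^sub>v v = v) = ((U * real_diag n f * adj U) *\<^sub>v v = complex_of_real l \<cdot>\<^sub>v v))"
    using spectral_proj[OF U] carrier_matD(1)[OF spectral_proj(1)[OF U]] fixP by (auto simp: hermitian_def)
  fix P' assume "P' \<in> carrier_mat n n \<and> hermitian P' \<and> P' * P' = P' \<and>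
      (\<forall>v\<in>carrier_vec n. (P' *\<^sub>v v = v) = ((U * real_diag n f * adj U) *\<^sub>v v = complex_of_real l \<cdot>\<^sub>v v))"
  then show "P' = ?P"
    using orth_proj_unique[of P' n ?P] spectral_proj[OF U] fixP by (auto simp: hermitian_def)
qed

definition mat_sum :: "nat \<Rightarrow> real set \<Rightarrow> (real \<Rightarrow> complex mat) \<Rightarrow> complex mat" where
  "mat_sum n L F = mat n n (\<lambda>(i,j). \<Sum>l\<in>L. F l $$ (i,j))"

lemma mat_sum_carrier[simp]: "mat_sum n L F \<in> carrier_mat n n"
  by (simp add: mat_sum_def)

lemma quad_form_mat_sum:
  assumes L: "finite L" and F: "\<And>l. l \<in> L \<Longrightarrow> F l \<in> carrier_mat n n" and x: "x \<in> carrier_vec n"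
  shows "quad_form (mat_sum n L F) x = (\<Sum>l\<in>L. quad_form (F l) x)"
proof -
  have entrywise: "quad_form A x = (\<Sum>i<n. \<Sum>j<n. cnj (x $ i) * A $$ (i,j) * x $ j)" if "A \<in> carrier_mat n n" for A
    using that x
    by (auto simp: quad_form_def cinner_def scalar_prod_def sum_distrib_left lessThan_atLeast0 ac_simps intro!: sum.cong)
  have "quad_form (mat_sum n L F) x = (\<Sum>i<n. \<Sum>j<n. \<Sum>l\<in>L. cnj (x $ i) * F l $$ (i,j) * x $ j)"
    unfolding entrywise[OF mat_sum_carrier] by (simp add: mat_sum_def sum_distrib_left sum_distrib_right)
  also have "\<dots> = (\<Sum>l\<in>L. \<Sum>i<n. \<Sum>j<n. cnj (x $ i) * F l $$ (i,j) * x $ j)"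
    by (subst sum.swap, subst (2) sum.swap) (rule refl)
  also have "\<dots> = (\<Sum>l\<in>L. quad_form (F l) x)"
    using entrywise F by simp
  finally show ?thesis .
qed

lemma ctrace_mat_sum: assumes "\<And>l. l \<in> L \<Longrightarrow> F l \<in> carrier_mat n n"
  shows "ctrace (mat_sum n L F) = (\<Sum>l\<in>L. ctrace (F l))"
proof -
  have "ctrace (mat_sum n L F) = (\<Sum>l\<in>L. \<Sum>i<n. F l $$ (i,i))"
    unfolding ctrace_def mat_sum_def by (simp add: sum.swap[of _ L])
  also have "\<dots> = (\<Sum>l\<in>L. ctrace (F l))" unfolding ctrace_def using assms by (intro sum.cong) auto
  finally show ?thesis .
qed

lemma adj_mat_sum: assumes "\<And>l. l \<in> L \<Longrightarrow> F l \<in> carrier_mat n n" "\<And>l. l \<in> L \<Longrightarrow> adj (F l) = F l"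
  shows "adj (mat_sum n L F) = mat_sum n L F"
proof (rule eq_matI)
  fix i j assume "i < dim_row (mat_sum n L F)" "j < dim_col (mat_sum n L F)"
  then have i: "i < n" and j: "j < n" by (auto simp: mat_sum_def)
  have "cnj (F l $$ (j,i)) = F l $$ (i,j)" if "l \<in> L" for l
    using adj_index[of i "F l" j] assms[OF that] i j by simp
  then show "adj (mat_sum n L F) $$ (i,j) = mat_sum n L F $$ (i,j)" using i j by (simp add: mat_sum_def cnj_sum)
qed (auto simp: mat_sum_def)

lemma pinch_carrier: "\<tau> \<in> carrier_mat n n \<Longrightarrow> pinch \<tau> X \<in> carrier_mat n n"
  by (simp add: pinch_def)

lemma pinch_unitary_diag: assumes U: "unitary n U"
  shows "pinch (U * real_diag n f * adj U) X =
    mat_sum n (f ` {..<n}) (\<lambda>l. spectral_proj n U f l * X * spectral_proj n U f l)"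
  unfolding pinch_def mat_sum_def eig_proj_unitary_diag[OF U] rspec_unitary_diag[OF U]
    carrier_matD(1)[OF unitary_diag_carrier[OF U]] ..

text \<open>The trace is preserved because the spectral projections of \<tau> sum to the identity.\<close>

lemma ctrace_pinch:
  assumes T: "\<tau> \<in> carrier_mat n n" "adj \<tau> = \<tau>" and X: "X \<in> carrier_mat n n"
  shows "ctrace (pinch \<tau> X) = ctrace X"
proof -
  obtain U f where U: "unitary n U" "\<tau> = U * real_diag n f * adj U" using hermitian_unitary_diag[OF T] by blast
  let ?P = "spectral_proj n U f"
  let ?q = "\<lambda>i. quad_form X (col U i)"
  note P = spectral_proj[OF U(1)]
  have "ctrace (?P l * X * ?P l) = (\<Sum>i<n. ?q i * (if f i = l then 1 else 0))" for l
  proof -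
    have "ctrace (?P l * X * ?P l) = ctrace (?P l * (?P l * X))"
      using ctrace_mult_comm[of "?P l * X" n n "?P l"] P X by simp
    also have "?P l * (?P l * X) = ?P l * X" using P X by (simp flip: assoc_mult_mat[of _ n n _ n _ n])
    also have "ctrace (?P l * X) = ctrace (X * ?P l)" using ctrace_mult_comm[of "?P l" n n X] P X by simp
    also have "\<dots> = (\<Sum>i<n. ?q i * (if f i = l then 1 else 0))"
      unfolding spectral_proj_def ctrace_mult_unitary_diag[OF X U(1)] by (intro sum.cong) auto
    finally show ?thesis .
  qed
  moreover have "ctrace (pinch \<tau> X) = (\<Sum>l\<in>f ` {..<n}. ctrace (?P l * X * ?P l))"
    unfolding U(2) pinch_unitary_diag[OF U(1)] by (rule ctrace_mat_sum) (meson P(1) X mult_carrier_mat)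
  ultimately have "ctrace (pinch \<tau> X) = (\<Sum>l\<in>f ` {..<n}. \<Sum>i<n. ?q i * (if f i = l then 1 else 0))"
    by simp
  also have "\<dots> = (\<Sum>i<n. ?q i)"
  proof (subst sum.swap, intro sum.cong refl)
    fix i assume "i \<in> {..<n}"
    have "(\<Sum>l\<in>f ` {..<n}. ?q i * (if f i = l then 1 else 0)) = (\<Sum>l\<in>f ` {..<n}. if f i = l then ?q i else 0)"
      by (intro sum.cong) auto
    then show "(\<Sum>l\<in>f ` {..<n}. ?q i * (if f i = l then 1 else 0)) = ?q i"
      using \<open>i \<in> {..<n}\<close> by (simp add: sum.delta)
  qed
  also have "\<dots> = ctrace (X * (U * real_diag n (\<lambda>_. 1) * adj U))"
    unfolding ctrace_mult_unitary_diag[OF X U(1)] by simp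
  finally show ?thesis using unitary_diag_one[OF U(1), of "\<lambda>_. 1"] X by simp
qed

lemma pd_pinch:
  assumes T: "\<tau> \<in> carrier_mat n n" "adj \<tau> = \<tau>" and X: "X \<in> carrier_mat n n" and pX: "pd X"
  shows "pd (pinch \<tau> X)"
proof -
  obtain U f where U: "unitary n U" "\<tau> = U * real_diag n f * adj U" using hermitian_unitary_diag[OF T] by blast
  let ?P = "spectral_proj n U f"
  note P = spectral_proj[OF U(1)]
  have PXP: "?P l * X * ?P l \<in> carrier_mat n n" for l by (meson P(1) X mult_carrier_mat)
  have qPXP: "quad_form (?P l * X * ?P l) y = quad_form X (?P l *\<^sub>v y)" if "y \<in> carrier_vec n" for l y
    using quad_form_congruence[OF P(1) X that] P(2) by simp
  have pinch: "pinch \<tau> X = mat_sum n (f ` {..<n}) (\<lambda>l. ?P l * X * ?P l)"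
    unfolding U(2) by (rule pinch_unitary_diag[OF U(1)])
  have "0 < Re (quad_form (pinch \<tau> X) x)" if x: "x \<in> carrier_vec n" "x \<noteq> 0\<^sub>v n" for x
  proof -
    obtain k where k: "k < n" "(adj U *\<^sub>v x) $ k \<noteq> 0" using unitary_adj_mult_vec_nonzero[OF U(1) x] by blast
    have "adj U *\<^sub>v (?P (f k) *\<^sub>v x) = real_diag n (\<lambda>i. if f i = f k then 1 else 0) *\<^sub>v (adj U *\<^sub>v x)"
      using unitary_diag_mult_vec[OF U(1) x(1)] unitary_adj_mult_vec(2)[OF U(1)] unitaryD(1)[OF U(1)] x(1)
      by (simp add: spectral_proj_def)
    then have "(adj U *\<^sub>v (?P (f k) *\<^sub>v x)) $ k \<noteq> 0"
      using k unitaryD(1)[OF U(1)] x(1) by (simp add: real_diag_mult_vec)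
    then have Px: "?P (f k) *\<^sub>v x \<noteq> 0\<^sub>v n" using unitaryD(1)[OF U(1)] k by auto
    have "0 < Re (quad_form X (?P (f k) *\<^sub>v x))"
      by (rule pd_quad_form_pos[OF X pX mult_mat_vec_carrier[OF P(1) x(1)] Px])
    also have "\<dots> \<le> (\<Sum>l\<in>f ` {..<n}. Re (quad_form X (?P l *\<^sub>v x)))"
      by (rule member_le_sum) (use k pd_quad_form_nonneg[OF X pX mult_mat_vec_carrier[OF P(1) x(1)]] in auto)
    also have "\<dots> = Re (quad_form (pinch \<tau> X) x)"
      unfolding pinch quad_form_mat_sum[OF finite_imageI[OF finite_lessThan] PXP x(1)] qPXP[OF x(1)] by simp
    finally show ?thesis .
  qed
  moreover have "adj (pinch \<tau> X) = pinch \<tau> X"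
    unfolding pinch
    using adj_mat_sum[OF PXP] hermitian_congruence[OF X pd_hermitian[OF X pX] P(1)] P(2) by simp
  ultimately show ?thesis using pd_iff_quad_form[OF pinch_carrier[OF T(1)]] by blast
qed

theorem lemma7:
  fixes n :: nat and \<rho> \<sigma> :: "complex mat"
  assumes "density_op n \<rho>" and "density_op n \<sigma>"
    and "full_rank \<rho>" and "full_rank \<sigma>"
  shows "(\<forall>x::real. 0 \<le> x \<and> x \<le> lambda_min \<rho> \<longrightarrow>
            beta (1 - x) \<rho> \<sigma> = x * exp (- D_pinf \<rho> \<sigma>) \<and>
            1 - beta x \<rho> \<sigma> = x * exp (- D_minf \<rho> \<sigma>) \<and>
            beta_R (1 - x) \<rho> \<sigma> = x * exp (- D_pinf \<rho> (pinch \<rho> \<sigma>)) \<and>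
            1 - beta_R x \<rho> \<sigma> = x * exp (- D_minf \<rho> (pinch \<rho> \<sigma>))) \<and>
         (\<forall>x::real. 0 \<le> x \<and> x \<le> lambda_min (pinch \<sigma> \<rho>) \<longrightarrow>
            beta_L (1 - x) \<rho> \<sigma> = x * exp (- D_pinf (pinch \<sigma> \<rho>) \<sigma>) \<and>
            1 - beta_L x \<rho> \<sigma> = x * exp (- D_minf (pinch \<sigma> \<rho>) \<sigma>))"
proof -
  have r: "\<rho> \<in> carrier_mat n n" "pd \<rho>" "ctrace \<rho> = 1" and s: "\<sigma> \<in> carrier_mat n n" "pd \<sigma>" "ctrace \<sigma> = 1"
    using assms by (auto simp: density_op_def full_rank_def pd_def)
  have pr: "pinch \<rho> \<sigma> \<in> carrier_mat n n" "pd (pinch \<rho> \<sigma>)" "ctrace (pinch \<rho> \<sigma>) = 1"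
    using pinch_carrier[OF r(1)] pd_pinch[OF r(1) pd_hermitian[OF r(1,2)] s(1,2)]
      ctrace_pinch[OF r(1) pd_hermitian[OF r(1,2)] s(1)] s(3) by simp_all
  have ps: "pinch \<sigma> \<rho> \<in> carrier_mat n n" "pd (pinch \<sigma> \<rho>)" "ctrace (pinch \<sigma> \<rho>) = 1"
    using pinch_carrier[OF s(1)] pd_pinch[OF s(1) pd_hermitian[OF s(1,2)] r(1,2)]
      ctrace_pinch[OF s(1) pd_hermitian[OF s(1,2)] r(1)] r(3) by simp_all
  show ?thesis
    unfolding beta_R_def beta_L_def
    using beta_formulas[OF r(1) s(1) r(2) s(2) r(3) s(3)] beta_formulas[OF r(1) pr(1) r(2) pr(2) r(3) pr(3)]
      beta_formulas[OF ps(1) s(1) ps(2) s(2) ps(3) s(3)]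
    by blast
qed

end
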